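(* Let $(S,\|\cdot\|)$ be a complete $RN$ module over $K$ with base $(\Omega,\mathcal F,P)$, let $\{T(t):t\geq0\}$ be an a.s. bounded $C_{0}$--semigroup on $S$ and $(A,D(A))$ its infinitesimal generator. Then $A$ is a densely defined module homomorphism on $S$ and satisfies (a) $\frac{dT(t)x}{dt}=AT(t)x=T(t)Ax$ for any $x\in D(A)$ (and $t\ge 0$); (b) $T(r)x-x=\int_{0}^{r}T(s)Ax\,ds=\int_{0}^{r}AT(s)x\,ds$ for any $x\in D(A)$ and real $r>0$.
   Context: $(\Omega,\mathcal F,P)$ is a probability space; $L^{0}(\mathcal F,K)$ ($K=R$ or $C$) is the algebra of equivalence classes of $K$-valued $\mathcal F$-measurable random variables, ordered a.s.; $L^{0}_{+}(\mathcal F)=\{\xi\in L^0(\mathcal F,R):\xi\ge 0\}$. An $RN$ module over $K$ with base $(\Omega,\mathcal F,P)$ is a left $L^0(\mathcal F,K)$-module $S$ with a map $\|\cdot\|:S\to L^0_+(\mathcal F)$ such that $\|\xi x\|=|\xi|\|x\|$, $\|x+y\|\le\|x\|+\|y\|$, and $\|x\|=0$ implies $x=0$; it carries the $(\varepsilon,\lambda)$-topology, in which $x_n\to x$ iff $\|x_n-x\|\to0$ in probability; completeness, density, derivatives ($\frac{d}{dt}g(t)=\lim_{h\to0}\frac{g(t+h)-g(t)}{h}$) and Riemann integrals (limits of Riemann sums) of $S$-valued functions refer to this topology. $B(S)$ is the set of continuous module homomorphisms $S\to S$, with $\|T\|=\bigwedge\{\xi\in L^0_+(\mathcal F):\|Tx\|\le\xi\|x\|\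 \forall x\}$. A $C_0$--semigroup is $\{T(t):t\ge0\}\subset B(S)$ with $T(0)=I$, $T(s)T(t)=T(s+t)$, $\lim_{t\downarrow0}T(t)x=x$ for all $x$. It is a.s. bounded if there is a real $L>0$ with $\bigvee_{t\in[0,L]}\|T(t)\|\in L^0_+(\mathcal F)$. Its infinitesimal generator is $Ax=\lim_{t\downarrow0}\frac{T(t)x-x}{t}$ on $D(A)=\{x:\text{the limit exists}\}$. *)

theory Defs
  imports "HOL-Probability.Probability"
begin

text \<open>
Elements of L0(F,K) are represented by
their M-measurable representatives ('w => 'k); equalities/inequalities between elements of
L0 are read almost everywhere.  The RN module S is the carrier type 'a (an abelian group),
with the L0-action sm and the L0-valued norm nr (nr x is a representative of ||x||).
The scalar field K is a type 'k of class real_normed_field (up to isomorphism exactly R or C).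
\<close>

definition ae_eq :: "'w measure \<Rightarrow> ('w \<Rightarrow> 'b) \<Rightarrow> ('w \<Rightarrow> 'b) \<Rightarrow> bool" where
  "ae_eq M f g \<longleftrightarrow> (AE w in M. f w = g w)"

definition L0 :: "'w measure \<Rightarrow> ('w \<Rightarrow> 'k::real_normed_field) set" where
  "L0 M = borel_measurable M"

definition rsc :: "real \<Rightarrow> 'w \<Rightarrow> 'k::real_normed_field" where
  "rsc c = (\<lambda>w. of_real c)"

definition rn_module ::
  "'w measure \<Rightarrow> (('w \<Rightarrow> 'k::real_normed_field) \<Rightarrow> 'a::ab_group_add \<Rightarrow> 'a) \<Rightarrow> ('a \<Rightarrow> 'w \<Rightarrow> real) \<Rightarrow> bool"
where
  "rn_module M sm nr \<longleftrightarrow> prob_space M \<and>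
     (\<forall>\<xi>\<in>L0 M. \<forall>\<eta>\<in>L0 M. \<forall>x. ae_eq M \<xi> \<eta> \<longrightarrow> sm \<xi> x = sm \<eta> x) \<and>
     (\<forall>\<xi>\<in>L0 M. \<forall>\<eta>\<in>L0 M. \<forall>x. sm (\<lambda>w. \<xi> w + \<eta> w) x = sm \<xi> x + sm \<eta> x) \<and>
     (\<forall>\<xi>\<in>L0 M. \<forall>x y. sm \<xi> (x + y) = sm \<xi> x + sm \<xi> y) \<and>
     (\<forall>\<xi>\<in>L0 M. \<forall>\<eta>\<in>L0 M. \<forall>x. sm (\<lambda>w. \<xi> w * \<eta> w) x = sm \<xi> (sm \<eta> x)) \<and>
     (\<forall>x. sm (\<lambda>w. 1) x = x) \<and>
     (\<forall>x. nr x \<in> borel_measurable M \<and> (AE w in M. 0 \<le> nr x w)) \<and>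
     (\<forall>\<xi>\<in>L0 M. \<forall>x. AE w in M. nr (sm \<xi> x) w = norm (\<xi> w) * nr x w) \<and>
     (\<forall>x y. AE w in M. nr (x + y) w \<le> nr x w + nr y w) \<and>
     (\<forall>x. (AE w in M. nr x w = 0) \<longrightarrow> x = 0)"

text \<open>Convergence in the (epsilon,lambda)-topology along a filter:
  ||f i - x|| tends to 0 in probability.\<close>
definition rn_tendsto ::
  "'w measure \<Rightarrow> ('a::ab_group_add \<Rightarrow> 'w \<Rightarrow> real) \<Rightarrow> ('i \<Rightarrow> 'a) \<Rightarrow> 'a \<Rightarrow> 'i filter \<Rightarrow> bool" where
  "rn_tendsto M nr f x F \<longleftrightarrow>
     (\<forall>\<epsilon>>0. ((\<lambda>i. measure M {w\<in>space M. \<epsilon> \<le> nr (f i - x) w}) \<longlongrightarrow> 0) F)"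

definition rn_complete :: "'w measure \<Rightarrow> ('a::ab_group_add \<Rightarrow> 'w \<Rightarrow> real) \<Rightarrow> bool" where
  "rn_complete M nr \<longleftrightarrow>
     (\<forall>X::nat \<Rightarrow> 'a.
        (\<forall>\<epsilon>>0. \<forall>lam>0. \<exists>N. \<forall>m\<ge>N. \<forall>n\<ge>N.
            measure M {w\<in>space M. \<epsilon> \<le> nr (X m - X n) w} < lam)
        \<longrightarrow> (\<exists>x. rn_tendsto M nr X x sequentially))"

text \<open>D is dense: every basic (epsilon,lambda)-neighbourhood
  U(x,eps,lam) = {y. P{||y - x|| < eps} > 1 - lam} meets D.\<close>
definition rn_dense :: "'w measure \<Rightarrow> ('a::ab_group_add \<Rightarrow> 'w \<Rightarrow> real) \<Rightarrow> 'a set \<Rightarrow> bool" where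
  "rn_dense M nr D \<longleftrightarrow>
     (\<forall>x. \<forall>\<epsilon>>0. \<forall>lam>0. \<exists>y\<in>D. measure M {w\<in>space M. nr (y - x) w < \<epsilon>} > 1 - lam)"

definition rn_continuous :: "'w measure \<Rightarrow> ('a::ab_group_add \<Rightarrow> 'w \<Rightarrow> real) \<Rightarrow> ('a \<Rightarrow> 'a) \<Rightarrow> bool" where
  "rn_continuous M nr f \<longleftrightarrow>
     (\<forall>x. \<forall>\<epsilon>>0. \<forall>lam>0. \<exists>\<delta>>0. \<exists>\<eta>>0. \<forall>y.
        measure M {w\<in>space M. nr (y - x) w < \<delta>} > 1 - \<eta> \<longrightarrow>
        measure M {w\<in>space M. nr (f y - f x) w < \<epsilon>} > 1 - lam)"

definition module_hom_on ::
  "'w measure \<Rightarrow> (('w \<Rightarrow> 'k::real_normed_field) \<Rightarrow> 'a::ab_group_add \<Rightarrow> 'a) \<Rightarrow> 'a set \<Rightarrow> ('a \<Rightarrow> 'a) \<Rightarrow> bool"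
where
  "module_hom_on M sm D f \<longleftrightarrow>
     (\<forall>x\<in>D. \<forall>y\<in>D. f (x + y) = f x + f y) \<and>
     (\<forall>\<xi>\<in>L0 M. \<forall>x\<in>D. f (sm \<xi> x) = sm \<xi> (f x))"

definition submodule ::
  "'w measure \<Rightarrow> (('w \<Rightarrow> 'k::real_normed_field) \<Rightarrow> 'a::ab_group_add \<Rightarrow> 'a) \<Rightarrow> 'a set \<Rightarrow> bool"
where
  "submodule M sm D \<longleftrightarrow> 0 \<in> D \<and> (\<forall>x\<in>D. \<forall>y\<in>D. x + y \<in> D) \<and>
     (\<forall>\<xi>\<in>L0 M. \<forall>x\<in>D. sm \<xi> x \<in> D)"

definition in_BS ::
  "'w measure \<Rightarrow> (('w \<Rightarrow> 'k::real_normed_field) \<Rightarrow> 'a::ab_group_add \<Rightarrow> 'a) \<Rightarrow> ('a \<Rightarrow> 'w \<Rightarrow> real) \<Rightarrow> ('a \<Rightarrow> 'a) \<Rightarrow> bool"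
where
  "in_BS M sm nr f \<longleftrightarrow> module_hom_on M sm UNIV f \<and> rn_continuous M nr f"

definition C0_semigroup ::
  "'w measure \<Rightarrow> (('w \<Rightarrow> 'k::real_normed_field) \<Rightarrow> 'a::ab_group_add \<Rightarrow> 'a) \<Rightarrow> ('a \<Rightarrow> 'w \<Rightarrow> real)
    \<Rightarrow> (real \<Rightarrow> 'a \<Rightarrow> 'a) \<Rightarrow> bool"
where
  "C0_semigroup M sm nr T \<longleftrightarrow>
     (\<forall>t\<ge>0. in_BS M sm nr (T t)) \<and> T 0 = id \<and>
     (\<forall>s\<ge>0. \<forall>t\<ge>0. T s \<circ> T t = T (s + t)) \<and>
     (\<forall>x. rn_tendsto M nr (\<lambda>t. T t x) x (at_right 0))"

text \<open>a.s. bounded: for some real L > 0 the family {||T(t)|| : t in [0,L]} has an upper bound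
  in L0_+(F), i.e. there is a finite nonnegative xi with ||T(t)x|| <= xi ||x|| a.s.
  for all x and all t in [0,L] (equivalently: its supremum lies in L0_+(F)).\<close>
definition as_bounded :: "'w measure \<Rightarrow> ('a \<Rightarrow> 'w \<Rightarrow> real) \<Rightarrow> (real \<Rightarrow> 'a \<Rightarrow> 'a) \<Rightarrow> bool" where
  "as_bounded M nr T \<longleftrightarrow>
     (\<exists>L>0. \<exists>\<xi>\<in>borel_measurable M. (AE w in M. 0 \<le> \<xi> w) \<and>
        (\<forall>t\<in>{0..L}. \<forall>x. AE w in M. nr (T t x) w \<le> \<xi> w * nr x w))"

definition gen_domain ::
  "'w measure \<Rightarrow> (('w \<Rightarrow> 'k::real_normed_field) \<Rightarrow> 'a::ab_group_add \<Rightarrow> 'a) \<Rightarrow> ('a \<Rightarrow> 'w \<Rightarrow> real)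
    \<Rightarrow> (real \<Rightarrow> 'a \<Rightarrow> 'a) \<Rightarrow> 'a set"
where
  "gen_domain M sm nr T =
     {x. \<exists>y. rn_tendsto M nr (\<lambda>t. sm (rsc (1 / t)) (T t x - x)) y (at_right 0)}"

definition is_generator ::
  "'w measure \<Rightarrow> (('w \<Rightarrow> 'k::real_normed_field) \<Rightarrow> 'a::ab_group_add \<Rightarrow> 'a) \<Rightarrow> ('a \<Rightarrow> 'w \<Rightarrow> real)
    \<Rightarrow> (real \<Rightarrow> 'a \<Rightarrow> 'a) \<Rightarrow> ('a \<Rightarrow> 'a) \<Rightarrow> bool"
where
  "is_generator M sm nr T A \<longleftrightarrow>
     (\<forall>x\<in>gen_domain M sm nr T.
        rn_tendsto M nr (\<lambda>t. sm (rsc (1 / t)) (T t x - x)) (A x) (at_right 0))"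

text \<open>Derivative of g at t relative to the parameter set I (two-sided where possible,
  one-sided at boundary points): lim_{h->0, t+h in I} (g(t+h) - g t)/h = v.\<close>
definition rn_has_deriv ::
  "'w measure \<Rightarrow> (('w \<Rightarrow> 'k::real_normed_field) \<Rightarrow> 'a::ab_group_add \<Rightarrow> 'a) \<Rightarrow> ('a \<Rightarrow> 'w \<Rightarrow> real)
    \<Rightarrow> (real \<Rightarrow> 'a) \<Rightarrow> 'a \<Rightarrow> real \<Rightarrow> real set \<Rightarrow> bool"
where
  "rn_has_deriv M sm nr g v t I \<longleftrightarrow>
     rn_tendsto M nr (\<lambda>h. sm (rsc (1 / h)) (g (t + h) - g t)) v (at 0 within {h. t + h \<in> I})"

definition rn_has_integral ::
  "'w measure \<Rightarrow> (('w \<Rightarrow> 'k::real_normed_field) \<Rightarrow> 'a::ab_group_add \<Rightarrow> 'a) \<Rightarrow> ('a \<Rightarrow> 'w \<Rightarrow> real)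
    \<Rightarrow> (real \<Rightarrow> 'a) \<Rightarrow> real \<Rightarrow> real \<Rightarrow> 'a \<Rightarrow> bool"
where
  "rn_has_integral M sm nr g a b I \<longleftrightarrow>
     (\<forall>\<epsilon>>0. \<forall>lam>0. \<exists>\<delta>>0. \<forall>(n::nat) (s::nat \<Rightarrow> real) (\<tau>::nat \<Rightarrow> real).
        (s 0 = a \<and> s n = b \<and>
         (\<forall>i<n. s i < s (Suc i) \<and> s i \<le> \<tau> i \<and> \<tau> i \<le> s (Suc i) \<and> s (Suc i) - s i < \<delta>))
        \<longrightarrow> measure M {w\<in>space M.
              \<epsilon> \<le> nr ((\<Sum>i<n. sm (rsc (s (Suc i) - s i)) (g (\<tau> i))) - I) w} < lam)"

end

theory Submission
  imports Defs
begin

text \<open>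
  The algebraic half is formal: the difference quotients \<open>(T h x - x) / h\<close> commute with sums,
  with \<open>L\<^sup>0\<close>-scalar multiplication and with every \<open>T t\<close>, and all of these operations are
  continuous in the \<open>(\<epsilon>, \<lambda>)\<close>-topology. Continuity of \<open>T t\<close> only needs a random bound
  \<open>\<parallel>T s\<parallel> \<le> \<Xi>\<close> on \<open>[0, t]\<close> which is finite a.s.: off an event of small probability it is bounded
  by a constant. The same bound turns convergence of the right difference quotients into
  convergence of the left ones, giving the derivative of \<open>t \<mapsto> T t x\<close>.

  The analytic half rests on Riemann integrals of orbits. Their existence in a complete module
  is the delicate point, since two Riemann sums can only be compared if \<open>T a y - T b y\<close> is small
  simultaneously for arbitrarily many pairs with \<open>\<bar>a - b\<bar> < \<delta>\<close>; this uniform smallness is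
  extracted from the semigroup law by a counting argument. For \<open>Z = \<integral>\<^sub>0\<^sup>r T s x ds\<close> one has
  \<open>T h Z - Z = \<integral>\<^sub>r\<^sup>r\<^sup>+\<^sup>h T s x ds - \<integral>\<^sub>0\<^sup>h T s x ds\<close>, hence \<open>(T h Z - Z) / h \<rightarrow> T r x - x\<close>. So
  \<open>Z \<in> D(A)\<close>, and \<open>Z / r \<rightarrow> x\<close> shows density; integrating the difference quotients of \<open>x \<in> D(A)\<close>
  yields \<open>\<integral>\<^sub>0\<^sup>r T s (A x) ds = T r x - x\<close>.
\<close>

section \<open>Finite measures and counting\<close>

lemma ge_mult_imp_disj:
  fixes \<xi> Y C e :: real
  assumes "0 \<le> \<xi>" "C > 0" "e > 0" "e \<le> \<xi> * Y"
  shows "C \<le> \<xi> \<or> e / C \<le> Y"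
proof (rule disjCI)
  assume "\<not> e / C \<le> Y"
  then have "C * Y < e" using assms(2) by (simp add: field_simps)
  show "C \<le> \<xi>"
  proof (rule ccontr)
    assume "\<not> C \<le> \<xi>"
    then have "\<xi> * Y \<le> C * Y" if "0 \<le> Y" using that by (intro mult_right_mono) auto
    moreover have "\<xi> * Y \<le> 0" if "Y < 0" using that assms(1) by (simp add: mult_nonneg_nonpos)
    ultimately show False using \<open>C * Y < e\<close> assms(3,4) by fastforce
  qed
qed

context finite_measure
begin

lemma measure_le_AE_imp:
  assumes "AE w in M. P w \<longrightarrow> Q w" and "{w\<in>space M. Q w} \<in> sets M"
  shows "measure M {w\<in>space M. P w} \<le> measure M {w\<in>space M. Q w}"
  by (rule finite_measure_mono_AE) (use assms in \<open>auto elim: AE_mp\<close>)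

lemma measure_le_AE_imp_disj:
  assumes "AE w in M. P w \<longrightarrow> Q1 w \<or> Q2 w"
    and "{w\<in>space M. Q1 w} \<in> sets M" "{w\<in>space M. Q2 w} \<in> sets M"
  shows "measure M {w\<in>space M. P w} \<le> measure M {w\<in>space M. Q1 w} + measure M {w\<in>space M. Q2 w}"
proof -
  have "measure M {w\<in>space M. P w} \<le> measure M ({w\<in>space M. Q1 w} \<union> {w\<in>space M. Q2 w})"
    by (rule finite_measure_mono_AE) (use assms in \<open>auto elim: AE_mp\<close>)
  also have "\<dots> \<le> measure M {w\<in>space M. Q1 w} + measure M {w\<in>space M. Q2 w}"
    using assms(2,3) by (rule measure_Un_le)
  finally show ?thesis .
qed

lemma exists_measure_ge_less:
  fixes \<xi> :: "'a \<Rightarrow> real"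
  assumes [measurable]: "\<xi> \<in> borel_measurable M" and "l > 0"
  shows "\<exists>C>0. measure M {w\<in>space M. C \<le> \<xi> w} < l"
proof -
  define B where "B n = {w\<in>space M. real n \<le> \<xi> w}" for n
  have "(\<lambda>n. measure M (B n)) \<longlonglongrightarrow> measure M (\<Inter> (range B))"
    by (rule finite_Lim_measure_decseq) (auto simp: B_def monotone_on_def)
  moreover have "\<Inter> (range B) = {}"
  proof safe
    fix w assume "w \<in> \<Inter> (range B)"
    moreover obtain n where "\<xi> w < real n" using reals_Archimedean2 by blast
    ultimately show "w \<in> {}" unfolding B_def by (auto simp: not_le[symmetric])
  qed
  ultimately have "(\<lambda>n. measure M (B n)) \<longlonglongrightarrow> 0" by simp
  from order_tendstoD(2)[OF this \<open>l > 0\<close>] obtain N where "\<forall>n\<ge>N. measure M (B n) < l"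
    unfolding eventually_sequentially by blast
  then have "measure M (B (Suc N)) < l" by simp
  then show ?thesis unfolding B_def by (intro exI[of _ "real (Suc N)"]) auto
qed

lemma measure_Ex_finite_le:
  assumes "finite H" and "\<And>h. h \<in> H \<Longrightarrow> {w\<in>space M. P h w} \<in> sets M"
    and "\<And>h. h \<in> H \<Longrightarrow> measure M {w\<in>space M. P h w} \<le> p"
  shows "measure M {w\<in>space M. \<exists>h\<in>H. P h w} \<le> real (card H) * p"
proof -
  have "{w\<in>space M. \<exists>h\<in>H. P h w} = (\<Union>h\<in>H. {w\<in>space M. P h w})" by auto
  then have "measure M {w\<in>space M. \<exists>h\<in>H. P h w} \<le> (\<Sum>h\<in>H. measure M {w\<in>space M. P h w})"
    using assms(1,2) by (simp add: finite_measure_subadditive_finite image_subset_iff)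
  also have "\<dots> \<le> real (card H) * p" using sum_mono[of H _ "\<lambda>_. p"] assms(3) by fastforce
  finally show ?thesis .
qed

lemma measure_mult_ge_le:
  fixes \<xi> Y :: "'a \<Rightarrow> real"
  assumes [measurable]: "\<xi> \<in> borel_measurable M" "Y \<in> borel_measurable M"
    and "AE w in M. 0 \<le> \<xi> w" and "C > 0" and "e > 0"
  shows "measure M {w\<in>space M. e \<le> \<xi> w * Y w}
     \<le> measure M {w\<in>space M. C \<le> \<xi> w} + measure M {w\<in>space M. e / C \<le> Y w}"
  by (rule measure_le_AE_imp_disj) (use assms(3-5) ge_mult_imp_disj in \<open>auto elim: AE_mp\<close>)

lemma measure_card_ge_le:
  assumes "finite J" and "\<And>j. j \<in> J \<Longrightarrow> {w\<in>space M. P j w} \<in> sets M"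
    and "\<And>j. j \<in> J \<Longrightarrow> measure M {w\<in>space M. P j w} \<le> p" and "k > 0"
  shows "measure M {w\<in>space M. k \<le> real (card {j\<in>J. P j w})} \<le> real (card J) * p / k"
proof -
  define S where "S j = {w\<in>space M. P j w}" for j
  define cnt where "cnt w = (\<Sum>j\<in>J. indicator (S j) w :: real)" for w
  have "{w\<in>space M. k \<le> real (card {j\<in>J. P j w})} = {w\<in>space M. k \<le> cnt w}"
    unfolding cnt_def indicator_def S_def using \<open>finite J\<close> by (auto simp: sum.If_cases Int_def)
  moreover have int: "integrable M cnt"
    unfolding cnt_def S_def using assms(2)
    by (intro Bochner_Integration.integrable_sum integrable_real_indicator) (auto simp: less_top[symmetric])
  then have "measure M {w\<in>space M. k \<le> cnt w} \<le> integral\<^sup>L M cnt / k"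
    by (rule integral_Markov_inequality_measure[OF _ _ _ \<open>k > 0\<close>]) (auto simp: cnt_def sum_nonneg)
  moreover have "integral\<^sup>L M cnt = (\<Sum>j\<in>J. measure M (S j))"
    unfolding cnt_def S_def using assms(2)
    by (subst Bochner_Integration.integral_sum) (auto intro!: integrable_real_indicator simp: less_top[symmetric])
  moreover have "(\<Sum>j\<in>J. measure M (S j)) \<le> real (card J) * p"
    using sum_mono[of J _ "\<lambda>_. p"] assms(3) unfolding S_def by fastforce
  ultimately show ?thesis using \<open>k > 0\<close> by (simp add: divide_right_mono order.trans)
qed

end

lemma nat_floor_divide_bounds:
  fixes h d :: real
  assumes "0 \<le> h" and "d > 0"
  shows "real (nat \<lfloor>h / d\<rfloor>) * d \<le> h" and "h < real (nat \<lfloor>h / d\<rfloor>) * d + d"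
proof -
  have "real (nat \<lfloor>h / d\<rfloor>) = of_int \<lfloor>h / d\<rfloor>" using assms by simp
  then have "real (nat \<lfloor>h / d\<rfloor>) \<le> h / d" "h / d < real (nat \<lfloor>h / d\<rfloor>) + 1" by linarith+
  then show "real (nat \<lfloor>h / d\<rfloor>) * d \<le> h" "h < real (nat \<lfloor>h / d\<rfloor>) * d + d"
    using assms(2) by (simp_all add: field_simps)
qed

lemma exists_shift_avoiding:
  fixes B :: "nat set"
  assumes "finite B" and "2 * card B \<le> N"
  shows "\<exists>j\<le>N. j \<notin> B \<and> j + m \<notin> B"
proof (rule ccontr)
  assume "\<not> ?thesis"
  then have "{..N} \<subseteq> B \<union> (\<lambda>b. b - m) ` B" by force
  then have "card {..N} \<le> card (B \<union> (\<lambda>b. b - m) ` B)"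
    using assms(1) by (intro card_mono) auto
  also have "\<dots> \<le> card B + card ((\<lambda>b. b - m) ` B)" by (rule card_Un_le)
  also have "\<dots> \<le> 2 * card B" using card_image_le[OF assms(1)] by simp
  finally show False using assms(2) by simp
qed

lemma less_via_good_shift:
  fixes G :: "nat \<Rightarrow> real"
  assumes "m \<le> N" and "2 * card {j\<in>{..2*N}. \<epsilon> \<le> G j} \<le> N"
    and "\<And>j. j \<le> N \<Longrightarrow> x \<le> G (j + m) + X * (G j + \<rho>)"
    and "\<rho> < \<epsilon>" "0 \<le> X" "X < C" "\<epsilon> > 0"
  shows "x < \<epsilon> * (1 + 2 * C)"
proof -
  have "finite {j\<in>{..2*N}. \<epsilon> \<le> G j}" by simp
  from exists_shift_avoiding[OF this assms(2)] obtain j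
    where j: "j \<le> N" "j \<notin> {j\<in>{..2*N}. \<epsilon> \<le> G j}" "j + m \<notin> {j\<in>{..2*N}. \<epsilon> \<le> G j}"
    by blast
  then have "G j < \<epsilon>" "G (j + m) < \<epsilon>" using assms(1) by auto
  then have "X * (G j + \<rho>) \<le> X * (2 * \<epsilon>)" using assms(4,5) by (intro mult_left_mono) auto
  also have "\<dots> < C * (2 * \<epsilon>)" using assms(6,7) by (intro mult_strict_right_mono) auto
  finally show ?thesis using assms(3)[OF j(1)] \<open>G (j + m) < \<epsilon>\<close> by (simp add: algebra_simps)
qed

section \<open>Tagged partitions and Riemann sums\<close>

definition tagged_partition :: "real \<Rightarrow> real \<Rightarrow> nat \<Rightarrow> (nat \<Rightarrow> real) \<Rightarrow> (nat \<Rightarrow> real) \<Rightarrow> bool" where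
  "tagged_partition a b n s \<tau> \<longleftrightarrow>
     s 0 = a \<and> s n = b \<and> (\<forall>i<n. s i < s (Suc i) \<and> s i \<le> \<tau> i \<and> \<tau> i \<le> s (Suc i))"

definition mesh_less :: "real \<Rightarrow> nat \<Rightarrow> (nat \<Rightarrow> real) \<Rightarrow> bool" where
  "mesh_less \<delta> n s \<longleftrightarrow> (\<forall>i<n. s (Suc i) - s i < \<delta>)"

definition riemann_sum ::
  "(('w \<Rightarrow> 'k::real_normed_field) \<Rightarrow> 'a \<Rightarrow> 'a) \<Rightarrow> (real \<Rightarrow> 'a::ab_group_add)
    \<Rightarrow> nat \<Rightarrow> (nat \<Rightarrow> real) \<Rightarrow> (nat \<Rightarrow> real) \<Rightarrow> 'a"
where
  "riemann_sum sm g n s \<tau> = (\<Sum>i<n. sm (rsc (s (Suc i) - s i)) (g (\<tau> i)))"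

lemma rn_has_integral_iff:
  "rn_has_integral M sm nr g a b I \<longleftrightarrow>
     (\<forall>e>0. \<forall>l>0. \<exists>\<delta>>0. \<forall>n s \<tau>. tagged_partition a b n s \<tau> \<and> mesh_less \<delta> n s \<longrightarrow>
        measure M {w\<in>space M. e \<le> nr (riemann_sum sm g n s \<tau> - I) w} < l)"
proof -
  have "(s 0 = a \<and> s n = b \<and>
      (\<forall>i<n. s i < s (Suc i) \<and> s i \<le> \<tau> i \<and> \<tau> i \<le> s (Suc i) \<and> s (Suc i) - s i < \<delta>))
      \<longleftrightarrow> tagged_partition a b n s \<tau> \<and> mesh_less \<delta> n s" for n s \<tau> \<delta>
    unfolding tagged_partition_def mesh_less_def by auto
  then show ?thesis unfolding rn_has_integral_def riemann_sum_def by simp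
qed

lemma rn_has_integralD:
  assumes "rn_has_integral M sm nr g a b J" and "e > 0" and "l > 0"
  obtains \<delta> where "\<delta> > 0" and "\<And>n s \<tau>. tagged_partition a b n s \<tau> \<Longrightarrow> mesh_less \<delta> n s \<Longrightarrow>
      measure M {w\<in>space M. e \<le> nr (riemann_sum sm g n s \<tau> - J) w} < l"
proof -
  obtain \<delta> where "\<delta> > 0" and \<delta>: "\<forall>n s \<tau>. tagged_partition a b n s \<tau> \<and> mesh_less \<delta> n s \<longrightarrow>
      measure M {w\<in>space M. e \<le> nr (riemann_sum sm g n s \<tau> - J) w} < l"
    using rn_has_integral_iff[THEN iffD1, rule_format, OF assms] by blast
  show ?thesis by (rule that[OF \<open>\<delta> > 0\<close>]) (use \<delta> in blast)
qed

lemma tagged_partition_mono: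
  assumes "tagged_partition a b n s \<tau>" "j \<le> k" "k \<le> n"
  shows "s j \<le> s k"
proof (rule lift_Suc_mono_le_ivl[where f=s and N="{..<n}"])
  show "s i \<le> s (Suc i)" if "i \<in> {..<n}" for i
    using assms(1) that unfolding tagged_partition_def by (simp add: less_imp_le)
qed (use assms(2,3) in auto)

lemma tagged_partition_point_in:
  "tagged_partition a b n s \<tau> \<Longrightarrow> i \<le> n \<Longrightarrow> s i \<in> {a..b}"
  using tagged_partition_mono[of a b n s \<tau> 0 i] tagged_partition_mono[of a b n s \<tau> i n]
  unfolding tagged_partition_def by auto

lemma tagged_partition_tag_in:
  assumes "tagged_partition a b n s \<tau>" and "i < n"
  shows "\<tau> i \<in> {a..b}"
proof -
  have "s i \<le> \<tau> i" "\<tau> i \<le> s (Suc i)" using assms unfolding tagged_partition_def by auto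
  moreover have "s i \<in> {a..b}" "s (Suc i) \<in> {a..b}"
    using assms tagged_partition_point_in[of a b n s \<tau> i] tagged_partition_point_in[of a b n s \<tau> "Suc i"]
    by auto
  ultimately show ?thesis by auto
qed

lemma tagged_partition_le: "tagged_partition a b n s \<tau> \<Longrightarrow> a \<le> b"
  using tagged_partition_point_in[of a b n s \<tau> n] by simp

lemma sum_tagged_partition_lengths:
  "tagged_partition a b n s \<tau> \<Longrightarrow> (\<Sum>i<n. s (Suc i) - s i) = b - a"
  unfolding tagged_partition_def by (simp add: sum_lessThan_telescope)

lemma riemann_sum_cong:
  assumes "tagged_partition a b n s \<tau>" and "\<And>t. t \<in> {a..b} \<Longrightarrow> f t = g t"
  shows "riemann_sum sm f n s \<tau> = riemann_sum sm g n s \<tau>"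
  unfolding riemann_sum_def using assms tagged_partition_tag_in by (intro sum.cong) auto

lemma rn_has_integral_cong:
  assumes "\<And>t. t \<in> {a..b} \<Longrightarrow> f t = g t" and "rn_has_integral M sm nr f a b I"
  shows "rn_has_integral M sm nr g a b I"
  unfolding rn_has_integral_iff
proof (intro allI impI)
  fix e l :: real assume "e > 0" "l > 0"
  with assms(2) obtain \<delta> where "\<delta> > 0" and \<delta>: "\<And>n s \<tau>. tagged_partition a b n s \<tau> \<and> mesh_less \<delta> n s \<Longrightarrow>
      measure M {w\<in>space M. e \<le> nr (riemann_sum sm f n s \<tau> - I) w} < l"
    unfolding rn_has_integral_iff by blast
  show "\<exists>\<delta>>0. \<forall>n s \<tau>. tagged_partition a b n s \<tau> \<and> mesh_less \<delta> n s \<longrightarrow>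
      measure M {w\<in>space M. e \<le> nr (riemann_sum sm g n s \<tau> - I) w} < l"
  proof (intro exI[of _ \<delta>] conjI allI impI)
    fix n s \<tau> assume P: "tagged_partition a b n s \<tau> \<and> mesh_less \<delta> n s"
    then have "riemann_sum sm g n s \<tau> = riemann_sum sm f n s \<tau>"
      using riemann_sum_cong[of a b n s \<tau> f g sm] assms(1) by simp
    then show "measure M {w\<in>space M. e \<le> nr (riemann_sum sm g n s \<tau> - I) w} < l"
      using \<delta>[OF P] by simp
  qed (rule \<open>\<delta> > 0\<close>)
qed

text \<open>\<open>overlap c d p q\<close> is the length of \<open>[c, d] \<inter> [p, q]\<close>; two Riemann sums over the same
  interval are compared on the common refinement of their partitions.\<close>

definition overlap :: "real \<Rightarrow> real \<Rightarrow> real \<Rightarrow> real \<Rightarrow> real" where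
  "overlap c d p q = max 0 (min d q - max c p)"

lemma overlap_commute: "overlap c d p q = overlap p q c d"
  unfolding overlap_def by (simp add: max.commute min.commute)

lemma overlap_nonneg: "0 \<le> overlap c d p q"
  unfolding overlap_def by simp

lemma overlap_nonzero_imp_close:
  assumes "overlap c d p q \<noteq> 0" "t \<in> {c..d}" "t' \<in> {p..q}"
  shows "\<bar>t - t'\<bar> \<le> (d - c) + (q - p)"
  using assms unfolding overlap_def by (auto simp: max_def min_def split: if_splits)

lemma sum_overlap_tagged_partition:
  assumes "tagged_partition a b m s \<tau>" "a \<le> c" "c \<le> d" "d \<le> b"
  shows "(\<Sum>k<m. overlap c d (s k) (s (Suc k))) = d - c"
proof -
  have "(\<Sum>k<j. overlap c d (s k) (s (Suc k))) = overlap c d (s 0) (s j)" if "j \<le> m" for j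
    using that
  proof (induction j)
    case (Suc j)
    have "s 0 \<le> s j" "s j \<le> s (Suc j)"
      using assms(1) Suc.prems by (auto intro: tagged_partition_mono)
    with Suc show ?case unfolding overlap_def by (auto simp: max_def min_def)
  qed (simp add: overlap_def)
  from this[of m] show ?thesis
    using assms unfolding tagged_partition_def overlap_def by (auto simp: max_def min_def)
qed

lemma sum_overlap_tagged_partitions:
  assumes P: "tagged_partition a b n s \<tau>" and Q: "tagged_partition a b m s' \<tau>'"
  shows "(\<Sum>p\<in>{..<n} \<times> {..<m}. overlap (s (fst p)) (s (Suc (fst p))) (s' (snd p)) (s' (Suc (snd p)))) = b - a"
proof -
  have "(\<Sum>p\<in>{..<n} \<times> {..<m}. overlap (s (fst p)) (s (Suc (fst p))) (s' (snd p)) (s' (Suc (snd p))))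
      = (\<Sum>i<n. \<Sum>k<m. overlap (s i) (s (Suc i)) (s' k) (s' (Suc k)))"
    unfolding sum.cartesian_product by (simp add: case_prod_beta)
  also have "\<dots> = (\<Sum>i<n. s (Suc i) - s i)"
  proof (intro sum.cong refl)
    fix i assume "i \<in> {..<n}"
    then show "(\<Sum>k<m. overlap (s i) (s (Suc i)) (s' k) (s' (Suc k))) = s (Suc i) - s i"
      using P tagged_partition_point_in[OF P, of i] tagged_partition_point_in[OF P, of "Suc i"]
      unfolding tagged_partition_def by (intro sum_overlap_tagged_partition[OF Q]) (auto simp: less_imp_le)
  qed
  finally show ?thesis using sum_tagged_partition_lengths[OF P] by simp
qed

definition uniform_points :: "real \<Rightarrow> real \<Rightarrow> nat \<Rightarrow> nat \<Rightarrow> real" where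
  "uniform_points a b N k = a + real k * (b - a) / real (Suc N)"

lemma uniform_points_Suc: "uniform_points a b N (Suc k) = uniform_points a b N k + (b - a) / real (Suc N)"
  unfolding uniform_points_def of_nat_Suc[of k] distrib_right add_divide_distrib by simp

lemma tagged_partition_uniform_points:
  assumes "a < b"
  shows "tagged_partition a b (Suc N) (uniform_points a b N) (uniform_points a b N)"
proof -
  have "uniform_points a b N (Suc N) = b" unfolding uniform_points_def by simp
  then show ?thesis using assms unfolding tagged_partition_def
    by (simp add: uniform_points_Suc) (simp add: uniform_points_def)
qed

lemma mesh_less_uniform_points:
  "(b - a) / real (Suc N) < \<delta> \<Longrightarrow> mesh_less \<delta> (Suc N) (uniform_points a b N)"
  unfolding mesh_less_def by (simp add: uniform_points_Suc)

lemma eventually_uniform_mesh_less: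
  "\<delta> > 0 \<Longrightarrow> eventually (\<lambda>N. (b - a) / real (Suc N) < \<delta>) sequentially"
  using LIMSEQ_Suc[OF lim_const_over_n[of "b - a"]] by (auto dest: order_tendstoD(2))

lemma exists_fine_tagged_partition:
  assumes "a < b" and "\<delta> > 0"
  shows "\<exists>n s \<tau>. tagged_partition a b n s \<tau> \<and> mesh_less \<delta> n s"
proof -
  obtain N where "(b - a) / real (Suc N) < \<delta>"
    using eventually_uniform_mesh_less[OF assms(2), of b a] unfolding eventually_sequentially by blast
  then show ?thesis using tagged_partition_uniform_points[OF assms(1)] mesh_less_uniform_points by blast
qed

definition join_points :: "nat \<Rightarrow> (nat \<Rightarrow> real) \<Rightarrow> (nat \<Rightarrow> real) \<Rightarrow> nat \<Rightarrow> real" where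
  "join_points n1 s1 s2 i = (if i \<le> n1 then s1 i else s2 (i - n1))"

definition join_tags :: "nat \<Rightarrow> (nat \<Rightarrow> real) \<Rightarrow> (nat \<Rightarrow> real) \<Rightarrow> nat \<Rightarrow> real" where
  "join_tags n1 t1 t2 i = (if i < n1 then t1 i else t2 (i - n1))"

lemma join_points_shift: "s1 n1 = s2 0 \<Longrightarrow> join_points n1 s1 s2 (n1 + i) = s2 i"
  unfolding join_points_def by auto

lemma tagged_partition_join:
  assumes "tagged_partition a b n1 s1 t1" and "tagged_partition b c n2 s2 t2"
  shows "tagged_partition a c (n1 + n2) (join_points n1 s1 s2) (join_tags n1 t1 t2)"
    and "mesh_less d n1 s1 \<Longrightarrow> mesh_less d n2 s2 \<Longrightarrow> mesh_less d (n1 + n2) (join_points n1 s1 s2)"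
proof -
  let ?s = "join_points n1 s1 s2" and ?t = "join_tags n1 t1 t2"
  have j: "s1 n1 = s2 0" using assms unfolding tagged_partition_def by simp
  have low: "?s i = s1 i" "?s (Suc i) = s1 (Suc i)" "?t i = t1 i" if "i < n1" for i
    using that by (simp_all add: join_points_def join_tags_def)
  have high: "?s (n1 + k) = s2 k" "?s (Suc (n1 + k)) = s2 (Suc k)" "?t (n1 + k) = t2 k" for k
    using join_points_shift[of s1 n1 s2 k, OF j] join_points_shift[of s1 n1 s2 "Suc k", OF j]
    by (simp_all add: join_tags_def)
  have split: "i < n1 \<or> (\<exists>k<n2. i = n1 + k)" if "i < n1 + n2" for i
    using that by presburger
  show "tagged_partition a c (n1 + n2) ?s ?t"
    unfolding tagged_partition_def
  proof (intro conjI allI impI)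
    show "?s 0 = a" using assms(1) by (simp add: join_points_def tagged_partition_def)
    show "?s (n1 + n2) = c" using high(1)[of n2] assms(2) by (simp add: tagged_partition_def)
    fix i assume "i < n1 + n2"
    with split have "i < n1 \<or> (\<exists>k<n2. i = n1 + k)" by blast
    then show "?s i < ?s (Suc i)" "?s i \<le> ?t i" "?t i \<le> ?s (Suc i)"
      using assms low high unfolding tagged_partition_def by auto
  qed
  show "mesh_less d (n1 + n2) ?s" if "mesh_less d n1 s1" "mesh_less d n2 s2"
    unfolding mesh_less_def
  proof (intro allI impI)
    fix i assume "i < n1 + n2"
    with split have "i < n1 \<or> (\<exists>k<n2. i = n1 + k)" by blast
    then show "?s (Suc i) - ?s i < d"
      using that low high unfolding mesh_less_def by auto
  qed
qed

lemma riemann_sum_join: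
  assumes "tagged_partition a b n1 s1 t1" and "tagged_partition b c n2 s2 t2"
  shows "riemann_sum sm g (n1 + n2) (join_points n1 s1 s2) (join_tags n1 t1 t2)
       = riemann_sum sm g n1 s1 t1 + riemann_sum sm g n2 s2 t2"
proof -
  have j: "s1 n1 = s2 0" using assms unfolding tagged_partition_def by simp
  let ?F = "\<lambda>i. sm (rsc (join_points n1 s1 s2 (Suc i) - join_points n1 s1 s2 i)) (g (join_tags n1 t1 t2 i))"
  have "(\<Sum>i<n1 + n2. ?F i) = (\<Sum>i<n1. ?F i) + (\<Sum>i<n2. ?F (n1 + i))"
    by (induction n2) (simp_all add: add.assoc)
  also have "(\<Sum>i<n1. ?F i) = riemann_sum sm g n1 s1 t1"
    unfolding riemann_sum_def by (intro sum.cong) (auto simp: join_points_def join_tags_def)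
  also have "(\<Sum>i<n2. ?F (n1 + i)) = riemann_sum sm g n2 s2 t2"
    unfolding riemann_sum_def
  proof (intro sum.cong refl)
    fix k
    have "join_points n1 s1 s2 (Suc (n1 + k)) = s2 (Suc k)"
      using join_points_shift[of s1 n1 s2 "Suc k", OF j] by simp
    then show "?F (n1 + k) = sm (rsc (s2 (Suc k) - s2 k)) (g (t2 k))"
      using join_points_shift[of s1 n1 s2 k, OF j] by (simp add: join_tags_def)
  qed
  finally show ?thesis unfolding riemann_sum_def .
qed

section \<open>Random normed modules\<close>

locale random_normed_module =
  fixes M :: "'w measure"
    and sm :: "('w \<Rightarrow> 'k::real_normed_field) \<Rightarrow> 'a::ab_group_add \<Rightarrow> 'a"
    and nr :: "'a \<Rightarrow> 'w \<Rightarrow> real"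
  assumes rn_module: "rn_module M sm nr"

sublocale random_normed_module \<subseteq> prob_space M
  using rn_module unfolding rn_module_def by blast

context random_normed_module
begin

abbreviation tail_prob :: "real \<Rightarrow> 'a \<Rightarrow> real" where
  "tail_prob e z \<equiv> measure M {w\<in>space M. e \<le> nr z w}"

lemma nr_measurable [measurable]: "nr x \<in> borel_measurable M"
  using rn_module unfolding rn_module_def by simp

lemma nr_nonneg: "AE w in M. 0 \<le> nr x w"
  using rn_module unfolding rn_module_def by simp

lemma rsc_in_L0 [simp]: "rsc c \<in> L0 M"
  unfolding L0_def rsc_def by simp

lemma sm_add: "\<xi> \<in> L0 M \<Longrightarrow> sm \<xi> (x + y) = sm \<xi> x + sm \<xi> y"
  using rn_module unfolding rn_module_def by simp

lemma sm_zero: "\<xi> \<in> L0 M \<Longrightarrow> sm \<xi> 0 = 0"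
  using sm_add[of \<xi> 0 0] by simp

lemma sm_minus: "\<xi> \<in> L0 M \<Longrightarrow> sm \<xi> (- x) = - sm \<xi> x"
  using sm_add[of \<xi> x "-x"] sm_zero[of \<xi>] by (simp add: eq_neg_iff_add_eq_0 add.commute)

lemma sm_diff: "\<xi> \<in> L0 M \<Longrightarrow> sm \<xi> (x - y) = sm \<xi> x - sm \<xi> y"
  using sm_add[of \<xi> x "-y"] sm_minus[of \<xi> y] by simp

lemma sm_sum: "\<xi> \<in> L0 M \<Longrightarrow> sm \<xi> (\<Sum>i\<in>I. f i) = (\<Sum>i\<in>I. sm \<xi> (f i))"
  by (induction I rule: infinite_finite_induct) (auto simp: sm_zero sm_add)

lemma sm_mult: "\<xi> \<in> L0 M \<Longrightarrow> \<eta> \<in> L0 M \<Longrightarrow> sm (\<lambda>w. \<xi> w * \<eta> w) x = sm \<xi> (sm \<eta> x)"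
  using rn_module unfolding rn_module_def by simp

lemma sm_scalar_add: "\<xi> \<in> L0 M \<Longrightarrow> \<eta> \<in> L0 M \<Longrightarrow> sm (\<lambda>w. \<xi> w + \<eta> w) x = sm \<xi> x + sm \<eta> x"
  using rn_module unfolding rn_module_def by simp

lemma sm_rsc_rsc: "sm (rsc a) (sm (rsc b) x) = sm (rsc (a * b)) x"
proof -
  have "sm (rsc a) (sm (rsc b) x) = sm (\<lambda>w. rsc a w * rsc b w) x" by (simp add: sm_mult)
  also have "(\<lambda>w. rsc a w * rsc b w) = rsc (a * b)" unfolding rsc_def by simp
  finally show ?thesis .
qed

lemma sm_rsc_add: "sm (rsc (a + b)) x = sm (rsc a) x + sm (rsc b) x"
proof -
  have "sm (rsc a) x + sm (rsc b) x = sm (\<lambda>w. rsc a w + rsc b w) x" by (simp add: sm_scalar_add)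
  also have "(\<lambda>w. rsc a w + rsc b w) = rsc (a + b)" unfolding rsc_def by simp
  finally show ?thesis by simp
qed

lemma sm_rsc_one [simp]: "sm (rsc 1) x = x"
proof -
  have "(rsc 1 :: 'w \<Rightarrow> 'k) = (\<lambda>w. 1)" unfolding rsc_def by simp
  then show ?thesis using rn_module unfolding rn_module_def by simp
qed

lemma sm_rsc_zero [simp]: "sm (rsc 0) x = 0"
  using sm_rsc_add[of 0 0 x] by simp

lemma sm_rsc_uminus: "sm (rsc (- a)) x = - sm (rsc a) x"
  using sm_rsc_add[of a "-a" x] by (simp add: eq_neg_iff_add_eq_0 add.commute)

lemma sm_rsc_sum: "sm (rsc (\<Sum>i\<in>I. c i)) x = (\<Sum>i\<in>I. sm (rsc (c i)) x)"
  by (induction I rule: infinite_finite_induct) (auto simp: sm_rsc_add)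

lemma sm_rsc_commute: "\<xi> \<in> L0 M \<Longrightarrow> sm \<xi> (sm (rsc c) x) = sm (rsc c) (sm \<xi> x)"
  using sm_mult[of \<xi> "rsc c" x] sm_mult[of "rsc c" \<xi> x] by (simp add: mult.commute)

lemma nr_sm: "\<xi> \<in> L0 M \<Longrightarrow> AE w in M. nr (sm \<xi> x) w = norm (\<xi> w) * nr x w"
  using rn_module unfolding rn_module_def by simp

lemma nr_rsc: "AE w in M. nr (sm (rsc c) x) w = \<bar>c\<bar> * nr x w"
  using nr_sm[OF rsc_in_L0, of c x] unfolding rsc_def by simp

lemma nr_triangle: "AE w in M. nr (x + y) w \<le> nr x w + nr y w"
  using rn_module unfolding rn_module_def by simp

lemma nr_eq_0_AE_imp: "AE w in M. nr x w = 0 \<Longrightarrow> x = 0"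
  using rn_module unfolding rn_module_def by simp

lemma nr_uminus: "AE w in M. nr (- x) w = nr x w"
  using nr_rsc[of "-1" x] sm_rsc_uminus[of 1 x] by simp

lemma nr_zero: "AE w in M. nr 0 w = 0"
  using nr_rsc[of 0 0] by simp

lemma nr_commute: "AE w in M. nr (x - y) w = nr (y - x) w"
  using nr_uminus[of "y - x"] by simp

lemma nr_diff_le: "AE w in M. nr (x - y) w \<le> nr x w + nr y w"
  using nr_triangle[of x "-y"] nr_uminus[of y] by eventually_elim simp

lemma nr_triangle_diff: "AE w in M. nr (x - z) w \<le> nr (x - y) w + nr (y - z) w"
  using nr_triangle[of "x - y" "y - z"] by simp

lemma nr_sum: "finite I \<Longrightarrow> AE w in M. nr (\<Sum>i\<in>I. f i) w \<le> (\<Sum>i\<in>I. nr (f i) w)"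
proof (induction I rule: finite_induct)
  case empty
  then show ?case using nr_zero by eventually_elim simp
next
  case (insert a F)
  with nr_triangle[of "f a" "sum f F"] show ?case
    by (elim AE_mp) (auto intro!: AE_I2)
qed

lemma nr_sum_rsc:
  assumes "finite I"
  shows "AE w in M. nr (\<Sum>i\<in>I. sm (rsc (c i)) (f i)) w \<le> (\<Sum>i\<in>I. \<bar>c i\<bar> * nr (f i) w)"
proof -
  have "AE w in M. \<forall>i\<in>I. nr (sm (rsc (c i)) (f i)) w = \<bar>c i\<bar> * nr (f i) w"
    using assms nr_rsc by (simp add: AE_finite_all)
  with nr_sum[OF assms, of "\<lambda>i. sm (rsc (c i)) (f i)"] show ?thesis
    by eventually_elim (metis (no_types, lifting) sum.cong)
qed

lemma tail_prob_zero:
  assumes "e > 0" shows "tail_prob e 0 = 0"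
proof -
  have "tail_prob e 0 \<le> measure M {w\<in>space M. False}"
    by (rule measure_le_AE_imp) (use nr_zero assms in \<open>auto elim: AE_mp\<close>)
  then show ?thesis using measure_nonneg[of M] by (simp add: order.antisym)
qed

lemma tail_prob_commute: "tail_prob e (x - y) = tail_prob e (y - x)"
  by (rule finite_measure_eq_AE) (use nr_commute[of x y] in \<open>auto elim: AE_mp\<close>)

lemma tail_prob_triangle: "tail_prob e (x - z) \<le> tail_prob (e/2) (x - y) + tail_prob (e/2) (y - z)"
  by (rule measure_le_AE_imp_disj) (use nr_triangle_diff[of x z y] in \<open>auto elim: AE_mp\<close>)

lemma tail_prob_add:
  "tail_prob e ((u1 + u2) - (v1 + v2)) \<le> tail_prob (e/2) (u1 - v1) + tail_prob (e/2) (u2 - v2)"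
proof (rule measure_le_AE_imp_disj)
  have eq: "(u1 + u2) - (v1 + v2) = (u1 - v1) + (u2 - v2)" by (simp add: algebra_simps)
  show "AE w in M. e \<le> nr (u1 + u2 - (v1 + v2)) w \<longrightarrow> e/2 \<le> nr (u1 - v1) w \<or> e/2 \<le> nr (u2 - v2) w"
    using nr_triangle[of "u1 - v1" "u2 - v2"] unfolding eq by eventually_elim linarith
qed simp_all

lemma tail_prob_diff:
  "tail_prob e ((u1 - v1) - (u2 - v2)) \<le> tail_prob (e/2) (u1 - v1) + tail_prob (e/2) (u2 - v2)"
  using tail_prob_triangle[of e "u1 - v1" "u2 - v2" 0] tail_prob_commute[of "e/2" 0 "u2 - v2"] by simp

lemma tail_prob_rsc: "e > 0 \<Longrightarrow> tail_prob e (sm (rsc c) z) \<le> tail_prob (e / (\<bar>c\<bar> + 1)) z"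
proof (rule measure_le_AE_imp)
  assume "e > 0"
  have *: "e / (\<bar>c\<bar> + 1) \<le> n" if "e \<le> \<bar>c\<bar> * n" "0 \<le> n" for n :: real
  proof -
    have "\<bar>c\<bar> * n \<le> (\<bar>c\<bar> + 1) * n" using that(2) by (intro mult_right_mono) auto
    then have "e \<le> (\<bar>c\<bar> + 1) * n" using that(1) by linarith
    then show ?thesis by (simp add: divide_le_eq mult.commute add_pos_nonneg)
  qed
  show "AE w in M. e \<le> nr (sm (rsc c) z) w \<longrightarrow> e / (\<bar>c\<bar> + 1) \<le> nr z w"
    using nr_rsc[of c z] nr_nonneg[of z] by eventually_elim (auto intro: *)
qed simp

lemma eq_0_if_tail_prob_small:
  assumes "\<And>e l. e > 0 \<Longrightarrow> l > 0 \<Longrightarrow> tail_prob e z < l"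
  shows "z = 0"
proof (rule nr_eq_0_AE_imp)
  have null: "tail_prob e z = 0" if "e > 0" for e
  proof -
    have "tail_prob e z \<le> l" if "l > 0" for l using assms[of e l] \<open>e > 0\<close> that by simp
    then have "tail_prob e z \<le> 0" by (meson dense not_le)
    then show ?thesis using measure_nonneg[of M] by (simp add: order.antisym)
  qed
  have "AE w in M. nr z w < 1 / real (Suc n)" for n
  proof -
    have "AE w in M. \<not> (1 / real (Suc n) \<le> nr z w)"
      by (rule AE_I[where N="{w\<in>space M. 1 / real (Suc n) \<le> nr z w}"])
         (auto simp: emeasure_eq_measure null)
    then show ?thesis by eventually_elim simp
  qed
  then have "AE w in M. \<forall>n. nr z w < 1 / real (Suc n)" by (simp add: AE_all_countable)
  with nr_nonneg[of z] show "AE w in M. nr z w = 0"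
  proof eventually_elim
    case (elim w)
    show ?case
    proof (rule ccontr)
      assume "nr z w \<noteq> 0"
      with elim(1) obtain n where "1 / real (Suc n) < nr z w"
        using nat_approx_posE by (metis order_le_neq_trans)
      with elim(2) show False by (meson less_asym)
    qed
  qed
qed

lemma rn_tendsto_iff:
  "rn_tendsto M nr f x F \<longleftrightarrow> (\<forall>e>0. \<forall>l>0. eventually (\<lambda>i. tail_prob e (f i - x) < l) F)"
  unfolding rn_tendsto_def tendsto_iff dist_real_def by (simp add: measure_nonneg)

lemma rn_tendstoI:
  "(\<And>e l. e > 0 \<Longrightarrow> l > 0 \<Longrightarrow> eventually (\<lambda>i. tail_prob e (f i - x) < l) F) \<Longrightarrow> rn_tendsto M nr f x F"
  unfolding rn_tendsto_iff by blast

lemma rn_tendstoD: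
  "rn_tendsto M nr f x F \<Longrightarrow> e > 0 \<Longrightarrow> l > 0 \<Longrightarrow> eventually (\<lambda>i. tail_prob e (f i - x) < l) F"
  unfolding rn_tendsto_iff by blast

lemma rn_tendsto_cong:
  assumes "rn_tendsto M nr f x F" and "eventually (\<lambda>i. f i = g i) F"
  shows "rn_tendsto M nr g x F"
proof (rule rn_tendstoI)
  fix e l :: real assume "e > 0" "l > 0"
  with assms(1) have "eventually (\<lambda>i. tail_prob e (f i - x) < l) F" by (rule rn_tendstoD)
  with assms(2) show "eventually (\<lambda>i. tail_prob e (g i - x) < l) F" by eventually_elim simp
qed

lemma rn_tendsto_const: "rn_tendsto M nr (\<lambda>i. x) x F"
  by (rule rn_tendstoI) (simp add: tail_prob_zero)

lemma rn_tendsto_add: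
  assumes "rn_tendsto M nr f x F" and "rn_tendsto M nr g y F"
  shows "rn_tendsto M nr (\<lambda>i. f i + g i) (x + y) F"
proof (rule rn_tendstoI)
  fix e l :: real assume "e > 0" "l > 0"
  then have "eventually (\<lambda>i. tail_prob (e/2) (f i - x) < l/2 \<and> tail_prob (e/2) (g i - y) < l/2) F"
    using assms by (intro eventually_conj rn_tendstoD) auto
  then show "eventually (\<lambda>i. tail_prob e ((f i + g i) - (x + y)) < l) F"
  proof eventually_elim
    case (elim i)
    then show ?case using tail_prob_add[of e "f i" "g i" x y] by linarith
  qed
qed

lemma rn_tendsto_diff:
  assumes "rn_tendsto M nr f x F" and "rn_tendsto M nr g y F"
  shows "rn_tendsto M nr (\<lambda>i. f i - g i) (x - y) F"
proof (rule rn_tendstoI)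
  fix e l :: real assume "e > 0" "l > 0"
  then have "eventually (\<lambda>i. tail_prob (e/2) (f i - x) < l/2 \<and> tail_prob (e/2) (g i - y) < l/2) F"
    using assms by (intro eventually_conj rn_tendstoD) auto
  then show "eventually (\<lambda>i. tail_prob e ((f i - g i) - (x - y)) < l) F"
  proof eventually_elim
    case (elim i)
    have eq: "(f i - g i) - (x - y) = (f i - x) - (g i - y)" by (simp add: algebra_simps)
    show ?case using elim tail_prob_diff[of e "f i" x "g i" y] unfolding eq by linarith
  qed
qed

lemma rn_tendsto_unique:
  assumes "F \<noteq> bot" and "rn_tendsto M nr f x F" and "rn_tendsto M nr f y F"
  shows "x = y"
proof -
  have "x - y = 0"
  proof (rule eq_0_if_tail_prob_small)
    fix e l :: real assume "e > 0" "l > 0"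
    then have "eventually (\<lambda>i. tail_prob (e/2) (f i - x) < l/2 \<and> tail_prob (e/2) (f i - y) < l/2) F"
      using assms by (intro eventually_conj rn_tendstoD) auto
    then have "eventually (\<lambda>i. tail_prob e (x - y) < l) F"
    proof eventually_elim
      case (elim i)
      then show ?case
        using tail_prob_triangle[of e x y "f i"] tail_prob_commute[of "e/2" x "f i"] by simp
    qed
    then show "tail_prob e (x - y) < l" using assms(1) by (simp add: eventually_const_iff)
  qed
  then show ?thesis by simp
qed

lemma rn_tendsto_dominated:
  assumes [measurable]: "\<xi> \<in> borel_measurable M" and "AE w in M. 0 \<le> \<xi> w"
    and "eventually (\<lambda>i. AE w in M. nr (f i - x) w \<le> \<xi> w * nr (g i - y) w) F"
    and "rn_tendsto M nr g y F"
  shows "rn_tendsto M nr f x F"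
proof (rule rn_tendstoI)
  fix e l :: real assume "e > 0" "l > 0"
  obtain C where C: "C > 0" "measure M {w\<in>space M. C \<le> \<xi> w} < l / 2"
    using exists_measure_ge_less[of \<xi> "l/2"] \<open>l > 0\<close> by auto
  have "eventually (\<lambda>i. tail_prob (e / C) (g i - y) < l / 2) F"
    using assms(4) \<open>e > 0\<close> \<open>l > 0\<close> C by (intro rn_tendstoD) auto
  with assms(3) show "eventually (\<lambda>i. tail_prob e (f i - x) < l) F"
  proof eventually_elim
    case (elim i)
    have "tail_prob e (f i - x) \<le> measure M {w\<in>space M. e \<le> \<xi> w * nr (g i - y) w}"
      by (rule measure_le_AE_imp) (use elim(1) in \<open>auto elim: AE_mp\<close>)
    also have "\<dots> \<le> measure M {w\<in>space M. C \<le> \<xi> w} + tail_prob (e / C) (g i - y)"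
      by (rule measure_mult_ge_le) (use assms(2) C \<open>e > 0\<close> in auto)
    finally show ?case using C elim(2) by linarith
  qed
qed

lemma rn_tendsto_sm:
  assumes "\<xi> \<in> L0 M" and "rn_tendsto M nr f x F"
  shows "rn_tendsto M nr (\<lambda>i. sm \<xi> (f i)) (sm \<xi> x) F"
proof (rule rn_tendsto_dominated[OF _ _ _ assms(2)])
  have [measurable]: "\<xi> \<in> borel_measurable M" using assms(1) unfolding L0_def by simp
  show "(\<lambda>w. norm (\<xi> w)) \<in> borel_measurable M" by measurable
  show "eventually (\<lambda>i. AE w in M. nr (sm \<xi> (f i) - sm \<xi> x) w \<le> norm (\<xi> w) * nr (f i - x) w) F"
  proof (rule always_eventually, rule allI)
    fix i
    show "AE w in M. nr (sm \<xi> (f i) - sm \<xi> x) w \<le> norm (\<xi> w) * nr (f i - x) w"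
      using nr_sm[OF assms(1), of "f i - x"] unfolding sm_diff[OF assms(1), symmetric]
      by eventually_elim simp
  qed
qed simp

lemma riemann_sum_diff_common_refinement:
  assumes P: "tagged_partition a b n s \<tau>" and Q: "tagged_partition a b m s' \<tau>'"
  shows "riemann_sum sm g n s \<tau> - riemann_sum sm g m s' \<tau>' =
    (\<Sum>p\<in>{..<n}\<times>{..<m}. sm (rsc (overlap (s (fst p)) (s (Suc (fst p))) (s' (snd p)) (s' (Suc (snd p)))))
        (g (\<tau> (fst p)) - g (\<tau>' (snd p))))"
proof -
  define ov where "ov i k = overlap (s i) (s (Suc i)) (s' k) (s' (Suc k))" for i k
  have row: "s (Suc i) - s i = (\<Sum>k<m. ov i k)" if "i < n" for i
    using P Q that sum_overlap_tagged_partition[OF Q, of "s i" "s (Suc i)"]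
      tagged_partition_point_in[of a b n s \<tau> i] tagged_partition_point_in[of a b n s \<tau> "Suc i"]
    unfolding ov_def tagged_partition_def by (simp add: less_imp_le)
  have col: "s' (Suc k) - s' k = (\<Sum>i<n. ov i k)" if "k < m" for k
    using P Q that sum_overlap_tagged_partition[OF P, of "s' k" "s' (Suc k)"]
      tagged_partition_point_in[of a b m s' \<tau>' k] tagged_partition_point_in[of a b m s' \<tau>' "Suc k"]
    unfolding ov_def tagged_partition_def by (simp add: less_imp_le overlap_commute)
  have "riemann_sum sm g n s \<tau> = (\<Sum>i<n. \<Sum>k<m. sm (rsc (ov i k)) (g (\<tau> i)))"
    unfolding riemann_sum_def by (intro sum.cong) (auto simp: row sm_rsc_sum)
  moreover have "riemann_sum sm g m s' \<tau>' = (\<Sum>k<m. \<Sum>i<n. sm (rsc (ov i k)) (g (\<tau>' k)))"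
    unfolding riemann_sum_def by (intro sum.cong) (auto simp: col sm_rsc_sum)
  then have "riemann_sum sm g m s' \<tau>' = (\<Sum>i<n. \<Sum>k<m. sm (rsc (ov i k)) (g (\<tau>' k)))"
    by (simp only: sum.swap[of _ "{..<m}"])
  ultimately show ?thesis
    unfolding ov_def sum.cartesian_product by (simp add: sm_diff sum_subtractf[symmetric] case_prod_beta)
qed

lemma rn_has_integral_unique:
  assumes "a < b" and "rn_has_integral M sm nr g a b J1" and "rn_has_integral M sm nr g a b J2"
  shows "J1 = J2"
proof -
  have "J1 - J2 = 0"
  proof (rule eq_0_if_tail_prob_small)
    fix e l :: real assume "e > 0" "l > 0"
    obtain d1 where "d1 > 0" and d1: "\<And>n s \<tau>. tagged_partition a b n s \<tau> \<Longrightarrow> mesh_less d1 n s \<Longrightarrow>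
        tail_prob (e/2) (riemann_sum sm g n s \<tau> - J1) < l/2"
      by (rule rn_has_integralD[OF assms(2), of "e/2" "l/2"]) (use \<open>e > 0\<close> \<open>l > 0\<close> in auto)
    obtain d2 where "d2 > 0" and d2: "\<And>n s \<tau>. tagged_partition a b n s \<tau> \<Longrightarrow> mesh_less d2 n s \<Longrightarrow>
        tail_prob (e/2) (riemann_sum sm g n s \<tau> - J2) < l/2"
      by (rule rn_has_integralD[OF assms(3), of "e/2" "l/2"]) (use \<open>e > 0\<close> \<open>l > 0\<close> in auto)
    obtain n s \<tau> where P: "tagged_partition a b n s \<tau>" "mesh_less (min d1 d2) n s"
      using exists_fine_tagged_partition[OF assms(1), of "min d1 d2"] \<open>d1 > 0\<close> \<open>d2 > 0\<close> by auto
    then have "mesh_less d1 n s" "mesh_less d2 n s" unfolding mesh_less_def by auto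
    with P d1 d2 have "tail_prob (e/2) (riemann_sum sm g n s \<tau> - J1) < l/2"
      "tail_prob (e/2) (riemann_sum sm g n s \<tau> - J2) < l/2" by blast+
    then show "tail_prob e (J1 - J2) < l"
      using tail_prob_triangle[of e J1 J2 "riemann_sum sm g n s \<tau>"]
        tail_prob_commute[of "e/2" J1 "riemann_sum sm g n s \<tau>"] by linarith
  qed
  then show ?thesis by simp
qed

lemma rn_has_integral_diff:
  assumes "rn_has_integral M sm nr f a b I" and "rn_has_integral M sm nr g a b J"
  shows "rn_has_integral M sm nr (\<lambda>t. f t - g t) a b (I - J)"
  unfolding rn_has_integral_iff
proof (intro allI impI)
  fix e l :: real assume "e > 0" "l > 0"
  obtain d1 where "d1 > 0" and d1: "\<And>n s \<tau>. tagged_partition a b n s \<tau> \<Longrightarrow> mesh_less d1 n s \<Longrightarrow>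
      tail_prob (e/2) (riemann_sum sm f n s \<tau> - I) < l/2"
    by (rule rn_has_integralD[OF assms(1), of "e/2" "l/2"]) (use \<open>e > 0\<close> \<open>l > 0\<close> in auto)
  obtain d2 where "d2 > 0" and d2: "\<And>n s \<tau>. tagged_partition a b n s \<tau> \<Longrightarrow> mesh_less d2 n s \<Longrightarrow>
      tail_prob (e/2) (riemann_sum sm g n s \<tau> - J) < l/2"
    by (rule rn_has_integralD[OF assms(2), of "e/2" "l/2"]) (use \<open>e > 0\<close> \<open>l > 0\<close> in auto)
  have "tail_prob e (riemann_sum sm (\<lambda>t. f t - g t) n s \<tau> - (I - J)) < l"
    if "tagged_partition a b n s \<tau>" "mesh_less (min d1 d2) n s" for n s \<tau>
  proof -
    have "mesh_less d1 n s" "mesh_less d2 n s" using that(2) unfolding mesh_less_def by auto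
    then have "tail_prob (e/2) (riemann_sum sm f n s \<tau> - I) < l/2"
      "tail_prob (e/2) (riemann_sum sm g n s \<tau> - J) < l/2" using d1 d2 that(1) by blast+
    moreover have eq: "riemann_sum sm (\<lambda>t. f t - g t) n s \<tau> - (I - J)
        = (riemann_sum sm f n s \<tau> - I) - (riemann_sum sm g n s \<tau> - J)"
      unfolding riemann_sum_def by (simp add: sm_diff sum_subtractf algebra_simps)
    ultimately show ?thesis
      using tail_prob_diff[of e "riemann_sum sm f n s \<tau>" I "riemann_sum sm g n s \<tau>" J]
      unfolding eq by linarith
  qed
  then show "\<exists>\<delta>>0. \<forall>n s \<tau>. tagged_partition a b n s \<tau> \<and> mesh_less \<delta> n s \<longrightarrow>
      tail_prob e (riemann_sum sm (\<lambda>t. f t - g t) n s \<tau> - (I - J)) < l"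
    using \<open>d1 > 0\<close> \<open>d2 > 0\<close> by (intro exI[of _ "min d1 d2"]) auto
qed

lemma rn_has_integral_rsc:
  assumes "rn_has_integral M sm nr g a b J"
  shows "rn_has_integral M sm nr (\<lambda>t. sm (rsc c) (g t)) a b (sm (rsc c) J)"
  unfolding rn_has_integral_iff
proof (intro allI impI)
  fix e l :: real assume "e > 0" "l > 0"
  obtain d where "d > 0" and d: "\<And>n s \<tau>. tagged_partition a b n s \<tau> \<Longrightarrow> mesh_less d n s \<Longrightarrow>
      tail_prob (e / (\<bar>c\<bar> + 1)) (riemann_sum sm g n s \<tau> - J) < l"
    by (rule rn_has_integralD[OF assms, of "e / (\<bar>c\<bar> + 1)" l]) (use \<open>e > 0\<close> \<open>l > 0\<close> in auto)
  have eq: "riemann_sum sm (\<lambda>t. sm (rsc c) (g t)) n s \<tau> - sm (rsc c) J = sm (rsc c) (riemann_sum sm g n s \<tau> - J)"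
    for n s \<tau>
    unfolding riemann_sum_def by (simp add: sm_diff sm_sum sm_rsc_rsc mult.commute)
  show "\<exists>\<delta>>0. \<forall>n s \<tau>. tagged_partition a b n s \<tau> \<and> mesh_less \<delta> n s \<longrightarrow>
      tail_prob e (riemann_sum sm (\<lambda>t. sm (rsc c) (g t)) n s \<tau> - sm (rsc c) J) < l"
  proof (intro exI[of _ d] conjI allI impI)
    fix n s \<tau> assume "tagged_partition a b n s \<tau> \<and> mesh_less d n s"
    then have "tail_prob (e / (\<bar>c\<bar> + 1)) (riemann_sum sm g n s \<tau> - J) < l" using d by blast
    then show "tail_prob e (riemann_sum sm (\<lambda>t. sm (rsc c) (g t)) n s \<tau> - sm (rsc c) J) < l"
      using tail_prob_rsc[OF \<open>e > 0\<close>, of c "riemann_sum sm g n s \<tau> - J"] unfolding eq by linarith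
  qed (rule \<open>d > 0\<close>)
qed

lemma rn_has_integral_dominated_map:
  fixes L :: "'a \<Rightarrow> 'a"
  assumes add: "\<And>x y. L (x + y) = L x + L y" and rsc: "\<And>c x. L (sm (rsc c) x) = sm (rsc c) (L x)"
    and [measurable]: "\<Xi> \<in> borel_measurable M" and "AE w in M. 0 \<le> \<Xi> w"
    and dom: "\<And>x. AE w in M. nr (L x) w \<le> \<Xi> w * nr x w"
    and "rn_has_integral M sm nr g a b J"
  shows "rn_has_integral M sm nr (\<lambda>t. L (g t)) a b (L J)"
  unfolding rn_has_integral_iff
proof (intro allI impI)
  fix e l :: real assume "e > 0" "l > 0"
  obtain C where C: "C > 0" "measure M {w\<in>space M. C \<le> \<Xi> w} < l/2"
    using exists_measure_ge_less[of \<Xi> "l/2"] \<open>l > 0\<close> by auto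
  obtain d where "d > 0" and d: "\<And>n s \<tau>. tagged_partition a b n s \<tau> \<Longrightarrow> mesh_less d n s \<Longrightarrow>
      tail_prob (e / C) (riemann_sum sm g n s \<tau> - J) < l/2"
    by (rule rn_has_integralD[OF assms(6), of "e / C" "l/2"]) (use \<open>e > 0\<close> \<open>l > 0\<close> C(1) in auto)
  have L_diff: "L (x - y) = L x - L y" for x y
    using add[of "x - y" y] by (simp add: eq_diff_eq)
  have L_sum: "L (\<Sum>i\<in>I. f i) = (\<Sum>i\<in>I. L (f i))" for I and f :: "nat \<Rightarrow> 'a"
    using add by (induction I rule: infinite_finite_induct) (auto simp: L_diff[of 0 0, simplified])
  have "tail_prob e (riemann_sum sm (\<lambda>t. L (g t)) n s \<tau> - L J) < l"
    if "tagged_partition a b n s \<tau> \<and> mesh_less d n s" for n s \<tau>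
  proof -
    let ?z = "riemann_sum sm g n s \<tau> - J"
    have "riemann_sum sm (\<lambda>t. L (g t)) n s \<tau> - L J = L ?z"
      unfolding riemann_sum_def by (simp add: L_diff L_sum rsc)
    then have "tail_prob e (riemann_sum sm (\<lambda>t. L (g t)) n s \<tau> - L J)
        \<le> measure M {w\<in>space M. e \<le> \<Xi> w * nr ?z w}"
      using dom[of ?z] by (auto intro!: measure_le_AE_imp elim: AE_mp)
    also have "\<dots> \<le> measure M {w\<in>space M. C \<le> \<Xi> w} + tail_prob (e / C) ?z"
      by (rule measure_mult_ge_le) (use assms(4) C \<open>e > 0\<close> in auto)
    also have "tail_prob (e / C) ?z < l/2" using d that by blast
    finally show ?thesis using C(2) by linarith
  qed
  then show "\<exists>\<delta>>0. \<forall>n s \<tau>. tagged_partition a b n s \<tau> \<and> mesh_less \<delta> n s \<longrightarrow>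
      tail_prob e (riemann_sum sm (\<lambda>t. L (g t)) n s \<tau> - L J) < l"
    using \<open>d > 0\<close> by blast
qed

lemma rn_has_integral_shift:
  assumes "rn_has_integral M sm nr (\<lambda>t. g (t + h)) a b J"
  shows "rn_has_integral M sm nr g (a + h) (b + h) J"
  unfolding rn_has_integral_iff
proof (intro allI impI)
  fix e l :: real assume "e > 0" "l > 0"
  obtain d where "d > 0" and d: "\<And>n s \<tau>. tagged_partition a b n s \<tau> \<Longrightarrow> mesh_less d n s \<Longrightarrow>
      tail_prob e (riemann_sum sm (\<lambda>t. g (t + h)) n s \<tau> - J) < l"
    by (rule rn_has_integralD[OF assms, of e l]) (use \<open>e > 0\<close> \<open>l > 0\<close> in auto)
  have "tail_prob e (riemann_sum sm g n s \<tau> - J) < l"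
    if "tagged_partition (a + h) (b + h) n s \<tau> \<and> mesh_less d n s" for n s \<tau>
  proof -
    have "tagged_partition a b n (\<lambda>i. s i - h) (\<lambda>i. \<tau> i - h) \<and> mesh_less d n (\<lambda>i. s i - h)"
      using that unfolding tagged_partition_def mesh_less_def by auto
    moreover have "riemann_sum sm (\<lambda>t. g (t + h)) n (\<lambda>i. s i - h) (\<lambda>i. \<tau> i - h) = riemann_sum sm g n s \<tau>"
      unfolding riemann_sum_def by simp
    ultimately show ?thesis using d by fastforce
  qed
  then show "\<exists>\<delta>>0. \<forall>n s \<tau>. tagged_partition (a + h) (b + h) n s \<tau> \<and> mesh_less \<delta> n s \<longrightarrow>
      tail_prob e (riemann_sum sm g n s \<tau> - J) < l"
    using \<open>d > 0\<close> by blast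
qed

lemma rn_has_integral_join_eq:
  assumes "a < b" "b < c"
    and J1: "rn_has_integral M sm nr g a b J1" and J2: "rn_has_integral M sm nr g b c J2"
    and J: "rn_has_integral M sm nr g a c J"
  shows "J = J1 + J2"
proof -
  have "J - (J1 + J2) = 0"
  proof (rule eq_0_if_tail_prob_small)
    fix e l :: real assume "e > 0" "l > 0"
    obtain d1 where "d1 > 0" and d1: "\<And>n s \<tau>. tagged_partition a b n s \<tau> \<Longrightarrow> mesh_less d1 n s \<Longrightarrow>
        tail_prob (e/2/2) (riemann_sum sm g n s \<tau> - J1) < l/3"
      by (rule rn_has_integralD[OF J1, of "e/2/2" "l/3"]) (use \<open>e > 0\<close> \<open>l > 0\<close> in auto)
    obtain d2 where "d2 > 0" and d2: "\<And>n s \<tau>. tagged_partition b c n s \<tau> \<Longrightarrow> mesh_less d2 n s \<Longrightarrow>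
        tail_prob (e/2/2) (riemann_sum sm g n s \<tau> - J2) < l/3"
      by (rule rn_has_integralD[OF J2, of "e/2/2" "l/3"]) (use \<open>e > 0\<close> \<open>l > 0\<close> in auto)
    obtain d where "d > 0" and d: "\<And>n s \<tau>. tagged_partition a c n s \<tau> \<Longrightarrow> mesh_less d n s \<Longrightarrow>
        tail_prob (e/2) (riemann_sum sm g n s \<tau> - J) < l/3"
      by (rule rn_has_integralD[OF J, of "e/2" "l/3"]) (use \<open>e > 0\<close> \<open>l > 0\<close> in auto)
    define \<delta> where "\<delta> = min d1 (min d2 d)"
    have "\<delta> > 0" using \<open>d1 > 0\<close> \<open>d2 > 0\<close> \<open>d > 0\<close> by (simp add: \<delta>_def)
    obtain n1 s1 t1 where P1: "tagged_partition a b n1 s1 t1" "mesh_less \<delta> n1 s1"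
      using exists_fine_tagged_partition[OF assms(1) \<open>\<delta> > 0\<close>] by blast
    obtain n2 s2 t2 where P2: "tagged_partition b c n2 s2 t2" "mesh_less \<delta> n2 s2"
      using exists_fine_tagged_partition[OF assms(2) \<open>\<delta> > 0\<close>] by blast
    let ?R = "riemann_sum sm g (n1 + n2) (join_points n1 s1 s2) (join_tags n1 t1 t2)"
    have "mesh_less \<delta> (n1 + n2) (join_points n1 s1 s2)"
      using tagged_partition_join(2)[OF P1(1) P2(1) P1(2) P2(2)] .
    then have "mesh_less d (n1 + n2) (join_points n1 s1 s2)"
      unfolding \<delta>_def mesh_less_def by fastforce
    then have "tail_prob (e/2) (?R - J) < l/3"
      using d tagged_partition_join(1)[OF P1(1) P2(1)] by blast
    moreover have "mesh_less d1 n1 s1" "mesh_less d2 n2 s2"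
      using P1(2) P2(2) unfolding \<delta>_def mesh_less_def by fastforce+
    then have "tail_prob (e/2/2) (riemann_sum sm g n1 s1 t1 - J1) < l/3"
      "tail_prob (e/2/2) (riemann_sum sm g n2 s2 t2 - J2) < l/3"
      using d1 d2 P1(1) P2(1) by blast+
    ultimately show "tail_prob e (J - (J1 + J2)) < l"
      using tail_prob_triangle[of e J "J1 + J2" ?R] tail_prob_commute[of "e/2" J ?R]
        tail_prob_add[of "e/2" "riemann_sum sm g n1 s1 t1" "riemann_sum sm g n2 s2 t2" J1 J2]
        riemann_sum_join[OF P1(1) P2(1), of sm g]
      by simp
  qed
  then show ?thesis by simp
qed

text \<open>Dividing by \<open>h\<close> turns a deviation \<open>e\<close> of a mean over an interval of length \<open>h\<close> into a
  deviation \<open>e h\<close> of the integral.\<close>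

lemma tail_prob_mean_deviation_le:
  assumes "h > 0" and P: "tagged_partition a (a + h) n s \<tau>"
  shows "tail_prob e (sm (rsc (1/h)) J - g a) \<le> tail_prob (e*h/2) (riemann_sum sm g n s \<tau> - J) +
      measure M {w\<in>space M. e/2 * (\<Sum>i<n. s (Suc i) - s i)
        < nr (\<Sum>i<n. sm (rsc (s (Suc i) - s i)) (g (\<tau> i) - g a)) w}"
proof -
  define R where "R = riemann_sum sm g n s \<tau>"
  define X where "X = sm (rsc h) (g a)"
  have sum_c: "(\<Sum>i<n. s (Suc i) - s i) = h" using sum_tagged_partition_lengths[OF P] by simp
  have R_diff: "R - X = (\<Sum>i<n. sm (rsc (s (Suc i) - s i)) (g (\<tau> i) - g a))"
    unfolding R_def X_def riemann_sum_def sum_c[symmetric] sm_rsc_sum by (simp add: sum_subtractf sm_diff)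
  have eq: "sm (rsc (1/h)) J - g a = sm (rsc (1/h)) (J - X)"
    unfolding X_def using assms(1) by (simp add: sm_diff sm_rsc_rsc)
  have "e*h/2 \<le> nr (R - J) w \<or> e/2 * h < nr (R - X) w"
    if "e \<le> \<bar>1/h\<bar> * nr (J - X) w" "nr (J - X) w \<le> nr (R - J) w + nr (R - X) w" for w
  proof -
    have "e * h \<le> nr (J - X) w" using that(1) assms(1) by (simp add: field_simps)
    then show ?thesis using that(2) by linarith
  qed
  then have "AE w in M. e \<le> nr (sm (rsc (1/h)) J - g a) w \<longrightarrow>
      e*h/2 \<le> nr (R - J) w \<or> e/2 * (\<Sum>i<n. s (Suc i) - s i) < nr (R - X) w"
    unfolding eq sum_c using nr_rsc[of "1/h" "J - X"] nr_triangle_diff[of J X R] nr_commute[of J R]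
    by (elim AE_mp) (auto intro!: AE_I2)
  then show ?thesis
    unfolding R_diff[symmetric] R_def[symmetric] by (rule measure_le_AE_imp_disj) simp_all
qed

end

section \<open>Almost surely bounded \<open>C\<^sub>0\<close>-semigroups\<close>

locale rn_C0_semigroup = random_normed_module M sm nr
  for M :: "'w measure"
    and sm :: "('w \<Rightarrow> 'k::real_normed_field) \<Rightarrow> 'a::ab_group_add \<Rightarrow> 'a"
    and nr :: "'a \<Rightarrow> 'w \<Rightarrow> real" +
  fixes T :: "real \<Rightarrow> 'a \<Rightarrow> 'a"
  assumes C0_semigroup: "C0_semigroup M sm nr T"
    and as_bounded: "as_bounded M nr T"
begin

lemma T_in_BS: "t \<ge> 0 \<Longrightarrow> in_BS M sm nr (T t)"
  using C0_semigroup unfolding C0_semigroup_def by simp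

lemma T_0 [simp]: "T 0 x = x"
  using C0_semigroup unfolding C0_semigroup_def by simp

lemma T_T: "s \<ge> 0 \<Longrightarrow> t \<ge> 0 \<Longrightarrow> T s (T t x) = T (s + t) x"
  using C0_semigroup unfolding C0_semigroup_def by (metis comp_apply)

lemma T_commute: "s \<ge> 0 \<Longrightarrow> t \<ge> 0 \<Longrightarrow> T s (T t x) = T t (T s x)"
  by (simp add: T_T add.commute)

lemma rn_tendsto_T_at_0: "rn_tendsto M nr (\<lambda>t. T t x) x (at_right 0)"
  using C0_semigroup unfolding C0_semigroup_def by simp

lemma T_add: "t \<ge> 0 \<Longrightarrow> T t (x + y) = T t x + T t y"
  using T_in_BS[of t] unfolding in_BS_def module_hom_on_def by simp

lemma T_sm: "t \<ge> 0 \<Longrightarrow> \<xi> \<in> L0 M \<Longrightarrow> T t (sm \<xi> x) = sm \<xi> (T t x)"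
  using T_in_BS[of t] unfolding in_BS_def module_hom_on_def by simp

lemma T_rsc: "t \<ge> 0 \<Longrightarrow> T t (sm (rsc c) x) = sm (rsc c) (T t x)"
  by (simp add: T_sm)

lemma T_zero: "t \<ge> 0 \<Longrightarrow> T t 0 = 0"
  using T_add[of t 0 0] by simp

lemma T_diff: "t \<ge> 0 \<Longrightarrow> T t (x - y) = T t x - T t y"
  using T_add[of t "x - y" y] by (simp add: eq_diff_eq)

abbreviation dominates_T_on :: "real \<Rightarrow> ('w \<Rightarrow> real) \<Rightarrow> bool" where
  "dominates_T_on B \<Xi> \<equiv> \<forall>t\<in>{0..B}. \<forall>x. AE w in M. nr (T t x) w \<le> \<Xi> w * nr x w"

lemma dominates_T_on_multiple:
  assumes "L > 0" and "\<And>w. 1 \<le> \<Xi> w" and "dominates_T_on L \<Xi>"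
  shows "dominates_T_on (real n * L) (\<lambda>w. \<Xi> w ^ n)"
proof (induction n)
  case (Suc n)
  show ?case
  proof (intro ballI allI)
    fix t x assume t: "t \<in> {0..real (Suc n) * L}"
    have pow_ge: "\<Xi> w \<le> \<Xi> w ^ Suc n" "0 \<le> \<Xi> w ^ n" for w
      using assms(2)[of w] by (auto intro: order.trans[OF _ power_increasing[of 1]])
    show "AE w in M. nr (T t x) w \<le> \<Xi> w ^ Suc n * nr x w"
    proof (cases "t \<le> L")
      case True
      then have "AE w in M. nr (T t x) w \<le> \<Xi> w * nr x w" using t assms(3) by auto
      with nr_nonneg[of x] show ?thesis
        by eventually_elim (meson mult_right_mono order.trans pow_ge(1))
    next
      case False
      then have "T t x = T (t - L) (T L x)" using \<open>L > 0\<close> by (simp add: T_T)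
      moreover have "t - L \<in> {0..real n * L}" using t False by (auto simp: algebra_simps)
      then have "AE w in M. nr (T (t - L) (T L x)) w \<le> \<Xi> w ^ n * nr (T L x) w"
        using Suc.IH by blast
      moreover have "AE w in M. nr (T L x) w \<le> \<Xi> w * nr x w" using assms(1,3) by auto
      ultimately show ?thesis
      proof (elim AE_mp, intro AE_I2 impI)
        fix w assume "nr (T L x) w \<le> \<Xi> w * nr x w" "nr (T (t - L) (T L x)) w \<le> \<Xi> w ^ n * nr (T L x) w"
        then have "nr (T (t - L) (T L x)) w \<le> \<Xi> w ^ n * (\<Xi> w * nr x w)"
          using pow_ge(2)[of w] by (meson mult_left_mono order.trans)
        then show "nr (T t x) w \<le> \<Xi> w ^ Suc n * nr x w"
          using \<open>T t x = _\<close> by (simp add: mult.assoc mult.commute mult.left_commute)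
      qed
    qed
  qed
qed simp

lemma obtain_dominating:
  obtains \<Xi> where "\<Xi> \<in> borel_measurable M" and "\<And>w. 1 \<le> \<Xi> w" and "dominates_T_on B \<Xi>"
proof -
  obtain L \<xi> where L: "L > 0" and [measurable]: "\<xi> \<in> borel_measurable M"
    and \<xi>: "dominates_T_on L \<xi>"
    using as_bounded unfolding as_bounded_def by blast
  define \<Xi> where "\<Xi> w = max 1 (\<xi> w)" for w
  have "dominates_T_on L \<Xi>"
  proof (intro ballI allI)
    fix t x assume "t \<in> {0..L}"
    with \<xi> have "AE w in M. nr (T t x) w \<le> \<xi> w * nr x w" by blast
    with nr_nonneg[of x] show "AE w in M. nr (T t x) w \<le> \<Xi> w * nr x w"
    proof eventually_elim
      case (elim w)
      have "\<xi> w * nr x w \<le> \<Xi> w * nr x w" unfolding \<Xi>_def using elim(1) by (intro mult_right_mono) auto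
      then show ?case using elim(2) by linarith
    qed
  qed
  then have "dominates_T_on (real n * L) (\<lambda>w. \<Xi> w ^ n)" for n
    using L by (intro dominates_T_on_multiple) (auto simp: \<Xi>_def)
  moreover obtain n where "B \<le> real n * L"
    using L real_arch_simple[of "B / L"] by (auto simp: field_simps)
  ultimately have "dominates_T_on B (\<lambda>w. \<Xi> w ^ n)" by fastforce
  moreover have "(\<lambda>w. \<Xi> w ^ n) \<in> borel_measurable M" unfolding \<Xi>_def by measurable
  ultimately show ?thesis using that[of "\<lambda>w. \<Xi> w ^ n"] by (auto simp: \<Xi>_def intro: one_le_power)
qed

lemma rn_tendsto_T:
  assumes "t \<ge> 0" and "rn_tendsto M nr f x F"
  shows "rn_tendsto M nr (\<lambda>i. T t (f i)) (T t x) F"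
proof -
  obtain \<Xi> :: "'w \<Rightarrow> real" where [measurable]: "\<Xi> \<in> borel_measurable M"
    and "\<And>w. 1 \<le> \<Xi> w" and \<Xi>: "dominates_T_on t \<Xi>"
    using obtain_dominating[of t] by blast
  show ?thesis
  proof (rule rn_tendsto_dominated[OF _ _ _ assms(2)])
    show "AE w in M. 0 \<le> \<Xi> w" using \<open>\<And>w. 1 \<le> \<Xi> w\<close> by (auto intro: order.trans[OF zero_le_one])
    show "eventually (\<lambda>i. AE w in M. nr (T t (f i) - T t x) w \<le> \<Xi> w * nr (f i - x) w) F"
      using \<Xi> assms(1) by (simp add: T_diff[symmetric])
  qed simp
qed

subsection \<open>Uniform continuity of orbits\<close>

lemma orbit_increment_split:
  assumes "0 \<le> a" "a \<le> B" "0 \<le> u" "0 \<le> r" and "dominates_T_on B \<Xi>"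
  shows "AE w in M. nr (T (a + r) y - y) w
           \<le> nr (T (u + a) y - y) w + \<Xi> w * (nr (T u y - y) w + nr (T r y - y) w)"
proof -
  have eq: "T (a + r) y - y = ((T (u + a) y - y) - T a (T u y - y)) + T a (T r y - y)"
    using assms(1,3,4) by (simp add: T_diff T_T add.commute)
  have "AE w in M. nr (T a (T u y - y)) w \<le> \<Xi> w * nr (T u y - y) w"
    "AE w in M. nr (T a (T r y - y)) w \<le> \<Xi> w * nr (T r y - y) w"
    using assms(1,2,5) by auto
  with nr_triangle[of "(T (u + a) y - y) - T a (T u y - y)" "T a (T r y - y)"]
    nr_diff_le[of "T (u + a) y - y" "T a (T u y - y)"]
  show ?thesis unfolding eq by eventually_elim (simp add: distrib_left)
qed

lemma orbit_small_near_0: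
  assumes "e > 0" and "l > 0"
  shows "\<exists>b>0. \<forall>u. 0 \<le> u \<and> u < b \<longrightarrow> tail_prob e (T u y - y) < l"
proof -
  have "eventually (\<lambda>u. tail_prob e (T u y - y) < l) (at_right 0)"
    using rn_tendsto_T_at_0 assms by (rule rn_tendstoD)
  then obtain b where b: "b > 0" "\<And>u. 0 < u \<Longrightarrow> u < b \<Longrightarrow> tail_prob e (T u y - y) < l"
    unfolding eventually_at_right_field by auto
  have "tail_prob e (T u y - y) < l" if "0 \<le> u" "u < b" for u
    using that b(2)[of u] tail_prob_zero[OF \<open>e > 0\<close>] \<open>l > 0\<close> by (cases "u = 0") auto
  then show ?thesis using b(1) by blast
qed

lemma orbit_large_imp_bad_event:
  fixes N :: nat
  assumes "d > 0" and "finite H" and H: "\<And>h. h \<in> H \<Longrightarrow> 0 \<le> h \<and> h < real (N + 1) * d"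
    and "real N * d \<le> B" and \<Xi>: "dominates_T_on B \<Xi>" and "\<And>w. 0 \<le> \<Xi> w" and "e' > 0"
  shows "AE w in M. (\<exists>h\<in>H. e' * (1 + 2 * C) \<le> nr (T h y - y) w) \<longrightarrow>
      C \<le> \<Xi> w \<or> real (N + 1) / 2 \<le> real (card {j\<in>{..2*N}. e' \<le> nr (T (real j * d) y - y) w})
        \<or> (\<exists>h\<in>H. e' \<le> nr (T (h - real (nat \<lfloor>h / d\<rfloor>) * d) y - y) w)"
proof -
  define m where "m h = nat \<lfloor>h / d\<rfloor>" for h
  define r where "r h = h - real (m h) * d" for h
  have mr: "m h \<le> N" "0 \<le> r h" "r h < d" "h = real (m h) * d + r h" if "h \<in> H" for h
  proof -
    have h: "0 \<le> h" "h < real (N + 1) * d" using H[OF that] by auto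
    have m: "real (m h) * d \<le> h" "h < real (m h) * d + d"
      unfolding m_def using nat_floor_divide_bounds[OF h(1) \<open>d > 0\<close>] by auto
    then have "real (m h) * d < real (N + 1) * d" using h(2) by linarith
    then have "real (m h) < real (N + 1)" using \<open>d > 0\<close> by simp
    then show "m h \<le> N" by (simp only: of_nat_less_iff less_Suc_eq_le Suc_eq_plus1[symmetric])
    show "0 \<le> r h" "r h < d" "h = real (m h) * d + r h" using m by (auto simp: r_def)
  qed
  have bound: "AE w in M. \<forall>h\<in>H. \<forall>j\<in>{..N}. nr (T h y - y) w \<le> nr (T (real (j + m h) * d) y - y) w
      + \<Xi> w * (nr (T (real j * d) y - y) w + nr (T (r h) y - y) w)"
  proof (intro AE_finite_allI \<open>finite H\<close> finite_atMost)
    fix h j assume "h \<in> H" "j \<in> {..N}"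
    have "real (m h) * d \<le> real N * d"
      using mr(1)[OF \<open>h \<in> H\<close>] \<open>d > 0\<close> by (intro mult_right_mono) auto
    then have "real (m h) * d \<le> B" using \<open>real N * d \<le> B\<close> by linarith
    with \<open>h \<in> H\<close> show "AE w in M. nr (T h y - y) w \<le> nr (T (real (j + m h) * d) y - y) w
        + \<Xi> w * (nr (T (real j * d) y - y) w + nr (T (r h) y - y) w)"
      using orbit_increment_split[OF _ _ _ _ \<Xi>, of "real (m h) * d" "real j * d" "r h" y] mr \<open>d > 0\<close>
      by (simp add: distrib_right add.commute)
  qed
  have bad: "C \<le> \<Xi> w \<or> real (N + 1) / 2 \<le> real (card {j\<in>{..2*N}. e' \<le> nr (T (real j * d) y - y) w})
      \<or> (\<exists>h\<in>H. e' \<le> nr (T (h - real (m h) * d) y - y) w)"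
    if h: "h \<in> H" "e' * (1 + 2 * C) \<le> nr (T h y - y) w"
      and bound_w: "\<forall>j\<in>{..N}. nr (T h y - y) w \<le> nr (T (real (j + m h) * d) y - y) w
        + \<Xi> w * (nr (T (real j * d) y - y) w + nr (T (r h) y - y) w)" for w h
  proof (rule ccontr)
    assume "\<not> ?thesis"
    then have "real (2 * card {j\<in>{..2*N}. e' \<le> nr (T (real j * d) y - y) w}) < real (N + 1)"
      and "\<Xi> w < C" "nr (T (r h) y - y) w < e'"
      using h(1) unfolding r_def by auto
    then have "2 * card {j\<in>{..2*N}. e' \<le> nr (T (real j * d) y - y) w} \<le> N"
      by (simp only: of_nat_less_iff)
    then have "nr (T h y - y) w < e' * (1 + 2 * C)"
      using mr(1)[OF h(1)] bound_w \<open>e' > 0\<close> \<open>\<Xi> w < C\<close> \<open>nr (T (r h) y - y) w < e'\<close> \<open>0 \<le> \<Xi> w\<close>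
      by (intro less_via_good_shift[where G="\<lambda>j. nr (T (real j * d) y - y) w" and m="m h"
            and X="\<Xi> w" and \<rho>="nr (T (r h) y - y) w"]) auto
    then show False using h(2) by simp
  qed
  show ?thesis
    unfolding m_def[symmetric] using bad by (intro AE_mp[OF bound AE_I2] impI) blast
qed

text \<open>Write \<open>h = a + r\<close> with \<open>a\<close> on a grid
  \<open>{j d}\<close> and \<open>r < d\<close>. By Markov's inequality, with high probability at most half of the grid points \<open>j d\<close>, \<open>j \<le> 2N\<close>, are bad, so some shift
  \<open>u = j d\<close> makes both \<open>u\<close> and \<open>u + a\<close> good, and \<open>orbit_increment_split\<close>
  bounds the increment at \<open>h\<close> by those at \<open>u + a\<close>, \<open>u\<close> and \<open>r\<close>.\<close>

lemma orbit_uniformly_small_near_0: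
  assumes "e > 0" and "l > 0"
  shows "\<exists>\<delta>>0. \<forall>H. finite H \<and> H \<subseteq> {0..\<delta>} \<longrightarrow>
           measure M {w\<in>space M. \<exists>h\<in>H. e \<le> nr (T h y - y) w} < l"
proof -
  obtain \<Xi> :: "'w \<Rightarrow> real" where [measurable]: "\<Xi> \<in> borel_measurable M"
    and \<Xi>1: "\<And>w. 1 \<le> \<Xi> w" and \<Xi>: "dominates_T_on 1 \<Xi>"
    using obtain_dominating[of 1] by blast
  obtain C where C: "C > 0" "measure M {w\<in>space M. C \<le> \<Xi> w} < l/3"
    using exists_measure_ge_less[of \<Xi> "l/3"] \<open>l > 0\<close> by auto
  define e' where "e' = e / (1 + 2 * C)"
  have e': "e' > 0" "e' * (1 + 2 * C) = e" using \<open>e > 0\<close> C by (simp_all add: e'_def)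
  obtain b1 where b1: "b1 > 0" "\<forall>u. 0 \<le> u \<and> u < b1 \<longrightarrow> tail_prob e' (T u y - y) < l/12"
    using orbit_small_near_0[OF e'(1), of "l/12"] \<open>l > 0\<close> by auto
  define \<delta> where "\<delta> = min (b1/3) 1"
  have \<delta>: "\<delta> > 0" "2 * \<delta> < b1" "\<delta> \<le> 1" using b1 by (auto simp: \<delta>_def)
  have "measure M {w\<in>space M. \<exists>h\<in>H. e \<le> nr (T h y - y) w} < l"
    if H: "finite H" "H \<subseteq> {0..\<delta>}" for H
  proof -
    obtain b2 where b2: "b2 > 0" "\<forall>u. 0 \<le> u \<and> u < b2 \<longrightarrow> tail_prob e' (T u y - y) < l / (3 * (card H + 1))"
      using orbit_small_near_0[OF e'(1), of "l / (3 * (card H + 1))"] \<open>l > 0\<close> by auto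
    define d where "d = min b2 \<delta>"
    have d: "d > 0" "d \<le> b2" "d \<le> \<delta>" using b2 \<delta> by (auto simp: d_def)
    define N where "N = nat \<lfloor>\<delta> / d\<rfloor>"
    have "real N \<le> \<delta> / d" "\<delta> / d < real N + 1" using d \<delta>(1) by (simp_all add: N_def)
    then have N: "real N * d \<le> \<delta>" "\<delta> < real (N + 1) * d" using d(1) by (simp_all add: field_simps)
    define E1 where "E1 = {w\<in>space M. C \<le> \<Xi> w}"
    define E2 where "E2 = {w\<in>space M. real (N + 1) / 2 \<le> real (card {j\<in>{..2*N}. e' \<le> nr (T (real j * d) y - y) w})}"
    define E3 where "E3 = {w\<in>space M. \<exists>h\<in>H. e' \<le> nr (T (h - real (nat \<lfloor>h / d\<rfloor>) * d) y - y) w}"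
    have [measurable]: "E1 \<in> sets M" "E2 \<in> sets M" "E3 \<in> sets M"
      unfolding E1_def E2_def E3_def using H(1) by (auto intro: sets.sets_Collect_finite_Ex)
    have "measure M E2 \<le> real (card {..2*N}) * (l/12) / (real (N + 1) / 2)"
      unfolding E2_def
    proof (rule measure_card_ge_le)
      fix j assume "j \<in> {..2*N}"
      then have "real j * d \<le> real (2 * N) * d" using d(1) by (intro mult_right_mono) auto
      then have "real j * d < b1" using N(1) \<delta>(2) by simp
      then show "tail_prob e' (T (real j * d) y - y) \<le> l/12" using b1(2) d(1) by (auto intro: less_imp_le)
    qed auto
    also have "\<dots> < l/3" using \<open>l > 0\<close> by (simp add: field_simps)
    finally have E2: "measure M E2 < l/3" .
    have "measure M E3 \<le> real (card H) * (l / (3 * (card H + 1)))"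
      unfolding E3_def
    proof (rule measure_Ex_finite_le[OF H(1)])
      fix h assume "h \<in> H"
      then have "0 \<le> h" using H(2) by auto
      then have "real (nat \<lfloor>h / d\<rfloor>) * d \<le> h" "h < real (nat \<lfloor>h / d\<rfloor>) * d + d"
        using nat_floor_divide_bounds d(1) by auto
      then show "tail_prob e' (T (h - real (nat \<lfloor>h / d\<rfloor>) * d) y - y) \<le> l / (3 * (card H + 1))"
        using b2(2) d(2) by (simp add: less_imp_le)
    qed simp
    also have "\<dots> < l/3" using \<open>l > 0\<close> by (simp add: field_simps)
    finally have E3: "measure M E3 < l/3" .
    have "h \<in> H \<Longrightarrow> 0 \<le> h \<and> h < real (N + 1) * d" for h using H(2) N(2) by auto
    moreover have "real N * d \<le> 1" using N(1) \<delta>(3) by linarith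
    moreover have "0 \<le> \<Xi> w" for w using \<Xi>1[of w] by linarith
    ultimately have "AE w in M. (\<exists>h\<in>H. e' * (1 + 2 * C) \<le> nr (T h y - y) w) \<longrightarrow>
      C \<le> \<Xi> w \<or> real (N + 1) / 2 \<le> real (card {j\<in>{..2*N}. e' \<le> nr (T (real j * d) y - y) w})
        \<or> (\<exists>h\<in>H. e' \<le> nr (T (h - real (nat \<lfloor>h / d\<rfloor>) * d) y - y) w)"
      by (intro orbit_large_imp_bad_event[OF d(1) H(1) _ _ \<Xi> _ e'(1)])
    then have "AE w in M. (\<exists>h\<in>H. e \<le> nr (T h y - y) w) \<longrightarrow> w \<in> E1 \<union> E2 \<union> E3"
      unfolding e'(2) by (elim AE_mp) (auto intro!: AE_I2 simp: E1_def E2_def E3_def)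
    then have "measure M {w\<in>space M. \<exists>h\<in>H. e \<le> nr (T h y - y) w} \<le> measure M (E1 \<union> E2 \<union> E3)"
      by (intro finite_measure_mono_AE) auto
    also have "\<dots> \<le> measure M (E1 \<union> E2) + measure M E3" by (intro measure_Un_le) auto
    also have "\<dots> \<le> measure M E1 + measure M E2 + measure M E3"
      using measure_Un_le[of E1 M E2] by simp
    also have "\<dots> < l" using C(2) E2 E3 unfolding E1_def by linarith
    finally show ?thesis .
  qed
  then show ?thesis using \<delta>(1) by blast
qed

lemma orbit_difference_le:
  assumes "a \<in> {0..B}" "b \<in> {0..B}" and "dominates_T_on B \<Xi>"
  shows "AE w in M. nr (T a y - T b y) w \<le> \<Xi> w * nr (T \<bar>a - b\<bar> y - y) w"
proof -
  have *: "AE w in M. nr (T q y - T p y) w \<le> \<Xi> w * nr (T (q - p) y - y) w"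
    if "p \<in> {0..B}" "p \<le> q" for p q
  proof -
    have "T q y - T p y = T p (T (q - p) y - y)" using that by (simp add: T_diff T_T)
    then show ?thesis using assms(3) that(1) by simp
  qed
  show ?thesis
  proof (cases "a \<le> b")
    case True
    then have ab: "\<bar>a - b\<bar> = b - a" by simp
    show ?thesis using *[OF assms(1) True] nr_commute[of "T a y" "T b y"] unfolding ab
      by eventually_elim simp
  next
    case False
    with *[OF assms(2), of a] show ?thesis by simp
  qed
qed

lemma orbit_pairs_uniformly_close:
  assumes "e > 0" and "l > 0"
  shows "\<exists>\<delta>>0. \<forall>I a b. finite I \<and> (\<forall>i\<in>I. a i \<in> {0..B} \<and> b i \<in> {0..B} \<and> \<bar>a i - b i\<bar> < \<delta>) \<longrightarrow>
           measure M {w\<in>space M. \<exists>i\<in>I. e \<le> nr (T (a i) y - T (b i) y) w} < l"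
proof -
  obtain \<Xi> :: "'w \<Rightarrow> real" where [measurable]: "\<Xi> \<in> borel_measurable M"
    and \<Xi>1: "\<And>w. 1 \<le> \<Xi> w" and \<Xi>: "dominates_T_on B \<Xi>"
    using obtain_dominating[of B] by blast
  obtain C where C: "C > 0" "measure M {w\<in>space M. C \<le> \<Xi> w} < l/2"
    using exists_measure_ge_less[of \<Xi> "l/2"] \<open>l > 0\<close> by auto
  obtain \<delta> where \<delta>: "\<delta> > 0" and small: "\<And>H. finite H \<and> H \<subseteq> {0..\<delta>} \<Longrightarrow>
      measure M {w\<in>space M. \<exists>h\<in>H. e / C \<le> nr (T h y - y) w} < l/2"
    using orbit_uniformly_small_near_0[of "e/C" "l/2" y] assms C by auto
  have "measure M {w\<in>space M. \<exists>i\<in>I. e \<le> nr (T (a i) y - T (b i) y) w} < l"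
    if I: "finite I" "\<forall>i\<in>I. a i \<in> {0..B} \<and> b i \<in> {0..B} \<and> \<bar>a i - b i\<bar> < \<delta>" for I a b
  proof -
    define H where "H = (\<lambda>i. \<bar>a i - b i\<bar>) ` I"
    have H: "finite H \<and> H \<subseteq> {0..\<delta>}" using I unfolding H_def by (auto simp: less_imp_le)
    have "AE w in M. \<forall>i\<in>I. nr (T (a i) y - T (b i) y) w \<le> \<Xi> w * nr (T \<bar>a i - b i\<bar> y - y) w"
      using I orbit_difference_le[OF _ _ \<Xi>] by (simp add: AE_finite_all)
    moreover have split: "C \<le> \<Xi> w \<or> (\<exists>h\<in>H. e / C \<le> nr (T h y - y) w)"
      if i: "i \<in> I" "e \<le> \<Xi> w * nr (T \<bar>a i - b i\<bar> y - y) w" for i w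
      using ge_mult_imp_disj[OF _ C(1) \<open>e > 0\<close> i(2)] \<Xi>1[of w] i(1) unfolding H_def by force
    ultimately have "AE w in M. (\<exists>i\<in>I. e \<le> nr (T (a i) y - T (b i) y) w) \<longrightarrow>
        C \<le> \<Xi> w \<or> (\<exists>h\<in>H. e / C \<le> nr (T h y - y) w)"
    proof (elim AE_mp, intro AE_I2 impI)
      fix w assume "\<forall>i\<in>I. nr (T (a i) y - T (b i) y) w \<le> \<Xi> w * nr (T \<bar>a i - b i\<bar> y - y) w"
        and "\<exists>i\<in>I. e \<le> nr (T (a i) y - T (b i) y) w"
      then obtain i where "i \<in> I" "e \<le> \<Xi> w * nr (T \<bar>a i - b i\<bar> y - y) w"
        by (meson order.trans)
      then show "C \<le> \<Xi> w \<or> (\<exists>h\<in>H. e / C \<le> nr (T h y - y) w)" by (rule split)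
    qed
    then have "measure M {w\<in>space M. \<exists>i\<in>I. e \<le> nr (T (a i) y - T (b i) y) w}
       \<le> measure M {w\<in>space M. C \<le> \<Xi> w} + measure M {w\<in>space M. \<exists>h\<in>H. e / C \<le> nr (T h y - y) w}"
      using H by (intro measure_le_AE_imp_disj sets.sets_Collect_finite_Ex) auto
    also have "\<dots> < l" using C small[OF H] by linarith
    finally show ?thesis .
  qed
  then show ?thesis using \<delta> by blast
qed

lemma weighted_orbit_differences_small:
  assumes "e > 0" and "l > 0"
  shows "\<exists>\<delta>>0. \<forall>(I::'i set) (c::'i \<Rightarrow> real) a b. finite I \<and>
      (\<forall>i\<in>I. 0 \<le> c i \<and> (c i \<noteq> 0 \<longrightarrow> a i \<in> {0..B} \<and> b i \<in> {0..B} \<and> \<bar>a i - b i\<bar> < \<delta>)) \<longrightarrow>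
      measure M {w\<in>space M. e * (\<Sum>i\<in>I. c i) < nr (\<Sum>i\<in>I. sm (rsc (c i)) (T (a i) y - T (b i) y)) w} < l"
proof -
  obtain \<delta> where \<delta>: "\<delta> > 0" and close: "\<And>(I::'i set) a b. finite I \<and>
      (\<forall>i\<in>I. a i \<in> {0..B} \<and> b i \<in> {0..B} \<and> \<bar>a i - b i\<bar> < \<delta>) \<Longrightarrow>
      measure M {w\<in>space M. \<exists>i\<in>I. e \<le> nr (T (a i) y - T (b i) y) w} < l"
    using orbit_pairs_uniformly_close[OF assms, of B y] by blast
  have "measure M {w\<in>space M. e * (\<Sum>i\<in>I. c i) < nr (\<Sum>i\<in>I. sm (rsc (c i)) (T (a i) y - T (b i) y)) w} < l"
    if I: "finite I" "\<forall>i\<in>I. 0 \<le> c i \<and> (c i \<noteq> 0 \<longrightarrow> a i \<in> {0..B} \<and> b i \<in> {0..B} \<and> \<bar>a i - b i\<bar> < \<delta>)"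
    for I :: "'i set" and c :: "'i \<Rightarrow> real" and a b
  proof -
    define I' where "I' = {i\<in>I. c i \<noteq> 0}"
    have "finite I'" using I(1) unfolding I'_def by simp
    let ?d = "\<lambda>i. T (a i) y - T (b i) y"
    have sums: "(\<Sum>i\<in>I. c i) = (\<Sum>i\<in>I'. c i)" "(\<Sum>i\<in>I. sm (rsc (c i)) (?d i)) = (\<Sum>i\<in>I'. sm (rsc (c i)) (?d i))"
      unfolding I'_def using I(1) by (auto intro: sum.mono_neutral_right)
    have "\<exists>i\<in>I'. e \<le> nr (?d i) w"
      if "nr (\<Sum>i\<in>I'. sm (rsc (c i)) (?d i)) w \<le> (\<Sum>i\<in>I'. \<bar>c i\<bar> * nr (?d i) w)"
        and "e * (\<Sum>i\<in>I. c i) < nr (\<Sum>i\<in>I. sm (rsc (c i)) (?d i)) w" for w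
    proof (rule ccontr)
      assume "\<not> (\<exists>i\<in>I'. e \<le> nr (?d i) w)"
      then have "(\<Sum>i\<in>I'. \<bar>c i\<bar> * nr (?d i) w) \<le> (\<Sum>i\<in>I'. c i * e)"
      proof (intro sum_mono)
        fix i assume "i \<in> I'"
        then have "0 \<le> c i" "nr (?d i) w \<le> e" using I(2) \<open>\<not> _\<close> by (auto simp: I'_def)
        then show "\<bar>c i\<bar> * nr (?d i) w \<le> c i * e" by (simp add: mult_left_mono)
      qed
      also have "\<dots> = e * (\<Sum>i\<in>I. c i)" unfolding sums by (simp add: sum_distrib_left mult.commute)
      finally show False using that unfolding sums by linarith
    qed
    then have "AE w in M. e * (\<Sum>i\<in>I. c i) < nr (\<Sum>i\<in>I. sm (rsc (c i)) (?d i)) w \<longrightarrow> (\<exists>i\<in>I'. e \<le> nr (?d i) w)"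
      by (intro AE_mp[OF nr_sum_rsc[OF \<open>finite I'\<close>, of c ?d] AE_I2] impI)
    then have "measure M {w\<in>space M. e * (\<Sum>i\<in>I. c i) < nr (\<Sum>i\<in>I. sm (rsc (c i)) (?d i)) w}
        \<le> measure M {w\<in>space M. \<exists>i\<in>I'. e \<le> nr (?d i) w}"
      using \<open>finite I'\<close> by (intro measure_le_AE_imp sets.sets_Collect_finite_Ex) auto
    also have "\<dots> < l" using \<open>finite I'\<close> I(2) by (intro close) (auto simp: I'_def)
    finally show ?thesis .
  qed
  then show ?thesis using \<delta> by blast
qed

subsection \<open>Riemann integrals of orbits\<close>

lemma riemann_sums_orbit_Cauchy:
  assumes "0 \<le> a" and "e > 0" and "l > 0"
  obtains \<delta> where "\<delta> > 0"
    and "\<And>n s \<tau> m s' \<tau>'. tagged_partition a b n s \<tau> \<Longrightarrow> mesh_less \<delta> n s \<Longrightarrow>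
      tagged_partition a b m s' \<tau>' \<Longrightarrow> mesh_less \<delta> m s' \<Longrightarrow>
      tail_prob e (riemann_sum sm (\<lambda>t. T t y) n s \<tau> - riemann_sum sm (\<lambda>t. T t y) m s' \<tau>') < l"
proof -
  define e' where "e' = e / (\<bar>b - a\<bar> + 1)"
  have "e' > 0" using \<open>e > 0\<close> by (simp add: e'_def)
  obtain \<delta> where "\<delta> > 0" and small: "\<And>(I::(nat \<times> nat) set) c a' b'. finite I \<and>
      (\<forall>i\<in>I. 0 \<le> c i \<and> (c i \<noteq> 0 \<longrightarrow> a' i \<in> {0..b} \<and> b' i \<in> {0..b} \<and> \<bar>a' i - b' i\<bar> < \<delta>)) \<Longrightarrow>
      measure M {w\<in>space M. e' * (\<Sum>i\<in>I. c i) < nr (\<Sum>i\<in>I. sm (rsc (c i)) (T (a' i) y - T (b' i) y)) w} < l"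
    using weighted_orbit_differences_small[OF \<open>e' > 0\<close> \<open>l > 0\<close>, of b y] by blast
  have close: "tail_prob e (riemann_sum sm (\<lambda>t. T t y) n s \<tau> - riemann_sum sm (\<lambda>t. T t y) m s' \<tau>') < l"
    if P: "tagged_partition a b n s \<tau>" "mesh_less (\<delta>/2) n s"
      and Q: "tagged_partition a b m s' \<tau>'" "mesh_less (\<delta>/2) m s'" for n s \<tau> m s' \<tau>'
  proof -
    define c where "c p = overlap (s (fst p)) (s (Suc (fst p))) (s' (snd p)) (s' (Suc (snd p)))" for p
    define I where "I = {..<n} \<times> {..<m}"
    have sum_c: "(\<Sum>p\<in>I. c p) = b - a"
      unfolding I_def c_def by (rule sum_overlap_tagged_partitions[OF P(1) Q(1)])
    have "e' * (\<Sum>p\<in>I. c p) < e"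
      using tagged_partition_le[OF P(1)] \<open>e > 0\<close> unfolding sum_c e'_def by (simp add: field_simps)
    then have "tail_prob e (riemann_sum sm (\<lambda>t. T t y) n s \<tau> - riemann_sum sm (\<lambda>t. T t y) m s' \<tau>')
        \<le> measure M {w\<in>space M. e' * (\<Sum>p\<in>I. c p)
            < nr (\<Sum>p\<in>I. sm (rsc (c p)) (T (\<tau> (fst p)) y - T (\<tau>' (snd p)) y)) w}"
      unfolding riemann_sum_diff_common_refinement[OF P(1) Q(1)] I_def c_def
      by (intro measure_le_AE_imp AE_I2) auto
    also have "\<dots> < l"
    proof (rule small, intro conjI ballI impI)
      fix p assume "p \<in> I"
      then have i: "fst p < n" and k: "snd p < m" unfolding I_def by auto
      show "0 \<le> c p" unfolding c_def by (rule overlap_nonneg)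
      show "\<tau> (fst p) \<in> {0..b}" "\<tau>' (snd p) \<in> {0..b}"
        using tagged_partition_tag_in[OF P(1) i] tagged_partition_tag_in[OF Q(1) k] \<open>0 \<le> a\<close> by auto
      assume "c p \<noteq> 0"
      then have "\<bar>\<tau> (fst p) - \<tau>' (snd p)\<bar> \<le> (s (Suc (fst p)) - s (fst p)) + (s' (Suc (snd p)) - s' (snd p))"
        using P(1) Q(1) i k unfolding c_def tagged_partition_def by (intro overlap_nonzero_imp_close) auto
      also have "\<dots> < \<delta>/2 + \<delta>/2" using P(2) Q(2) i k unfolding mesh_less_def by (intro add_strict_mono) auto
      finally show "\<bar>\<tau> (fst p) - \<tau>' (snd p)\<bar> < \<delta>" by simp
    qed (simp add: I_def)
    finally show ?thesis .
  qed
  show ?thesis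
  proof (rule that)
    show "\<delta>/2 > 0" using \<open>\<delta> > 0\<close> by simp
  qed (rule close)
qed

lemma rn_has_integral_orbit_T:
  assumes "h \<ge> 0" and "rn_has_integral M sm nr (\<lambda>t. T t y) a b J" and "a \<ge> 0"
  shows "rn_has_integral M sm nr (\<lambda>t. T t (T h y)) a b (T h J)"
proof -
  obtain \<Xi> :: "'w \<Rightarrow> real" where [measurable]: "\<Xi> \<in> borel_measurable M"
    and \<Xi>1: "\<And>w. 1 \<le> \<Xi> w" and \<Xi>: "dominates_T_on h \<Xi>"
    using obtain_dominating[of h] by blast
  have "rn_has_integral M sm nr (\<lambda>t. T h (T t y)) a b (T h J)"
  proof (rule rn_has_integral_dominated_map[OF _ _ _ _ _ assms(2)])
    show "AE w in M. 0 \<le> \<Xi> w" using \<Xi>1 by (auto intro: order.trans[OF zero_le_one])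
    show "AE w in M. nr (T h x) w \<le> \<Xi> w * nr x w" for x using \<Xi> assms(1) by auto
  qed (use assms(1) in \<open>auto simp: T_add T_rsc\<close>)
  then show ?thesis
    by (rule rn_has_integral_cong[rotated]) (use assms in \<open>simp add: T_commute\<close>)
qed

lemma rn_tendsto_orbit_mean:
  assumes "0 \<le> a" and J: "\<And>h. h > 0 \<Longrightarrow> rn_has_integral M sm nr (\<lambda>t. T t y) a (a + h) (J h)"
  shows "rn_tendsto M nr (\<lambda>h. sm (rsc (1/h)) (J h)) (T a y) (at_right 0)"
proof (rule rn_tendstoI)
  fix e l :: real assume "e > 0" "l > 0"
  obtain \<delta> where "\<delta> > 0" and small: "\<And>(I::nat set) c a' b'. finite I \<and>
      (\<forall>i\<in>I. 0 \<le> c i \<and> (c i \<noteq> 0 \<longrightarrow> a' i \<in> {0..a+1} \<and> b' i \<in> {0..a+1} \<and> \<bar>a' i - b' i\<bar> < \<delta>)) \<Longrightarrow>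
      measure M {w\<in>space M. e/2 * (\<Sum>i\<in>I. c i) < nr (\<Sum>i\<in>I. sm (rsc (c i)) (T (a' i) y - T (b' i) y)) w} < l/2"
    using weighted_orbit_differences_small[of "e/2" "l/2" "a+1" y] \<open>e > 0\<close> \<open>l > 0\<close> by auto
  have "tail_prob e (sm (rsc (1/h)) (J h) - T a y) < l" if h: "0 < h" "h < min \<delta> 1" for h
  proof -
    obtain d where "d > 0" and d: "\<And>n s \<tau>. tagged_partition a (a + h) n s \<tau> \<Longrightarrow> mesh_less d n s \<Longrightarrow>
        tail_prob (e*h/2) (riemann_sum sm (\<lambda>t. T t y) n s \<tau> - J h) < l/2"
      by (rule rn_has_integralD[OF J[OF h(1)], of "e*h/2" "l/2"]) (use \<open>e > 0\<close> \<open>l > 0\<close> h in auto)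
    obtain n s \<tau> where P: "tagged_partition a (a + h) n s \<tau>" "mesh_less d n s"
      using exists_fine_tagged_partition[of a "a + h" d] h(1) \<open>d > 0\<close> by auto
    have "measure M {w\<in>space M. e/2 * (\<Sum>i<n. s (Suc i) - s i)
        < nr (\<Sum>i<n. sm (rsc (s (Suc i) - s i)) (T (\<tau> i) y - T a y)) w} < l/2"
    proof (rule small, intro conjI ballI impI)
      fix i assume "i \<in> {..<n}"
      then have "\<tau> i \<in> {a..a + h}" "0 \<le> s (Suc i) - s i"
        using tagged_partition_tag_in[OF P(1)] P(1) unfolding tagged_partition_def by (auto simp: less_imp_le)
      then show "0 \<le> s (Suc i) - s i" "\<tau> i \<in> {0..a+1}" "a \<in> {0..a+1}" "\<bar>\<tau> i - a\<bar> < \<delta>"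
        using \<open>0 \<le> a\<close> h by auto
    qed simp
    then show ?thesis
      using tail_prob_mean_deviation_le[OF h(1) P(1), of e "J h" "\<lambda>t. T t y"] d[OF P] by simp
  qed
  then show "eventually (\<lambda>h. tail_prob e (sm (rsc (1/h)) (J h) - T a y) < l) (at_right 0)"
    unfolding eventually_at_right_field using \<open>\<delta> > 0\<close> by (intro exI[of _ "min \<delta> 1"]) auto
qed

lemma tail_prob_orbit_integral_le:
  assumes "0 \<le> a" "a < b" and [measurable]: "\<Xi> \<in> borel_measurable M" and \<Xi>: "dominates_T_on b \<Xi>"
    and J: "rn_has_integral M sm nr (\<lambda>t. T t z) a b J" and "e > 0"
  shows "tail_prob e J \<le> measure M {w\<in>space M. e/2 \<le> (b - a) * \<Xi> w * nr z w}"
proof (rule field_le_epsilon)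
  fix l :: real assume "l > 0"
  obtain d where "d > 0" and d: "\<And>n s \<tau>. tagged_partition a b n s \<tau> \<Longrightarrow> mesh_less d n s \<Longrightarrow>
      tail_prob (e/2) (riemann_sum sm (\<lambda>t. T t z) n s \<tau> - J) < l"
    by (rule rn_has_integralD[OF J, of "e/2" l]) (use \<open>e > 0\<close> \<open>l > 0\<close> in auto)
  obtain n s \<tau> where P: "tagged_partition a b n s \<tau>" "mesh_less d n s"
    using exists_fine_tagged_partition[OF assms(2) \<open>d > 0\<close>] by auto
  let ?R = "riemann_sum sm (\<lambda>t. T t z) n s \<tau>"
  have bound: "AE w in M. \<forall>i\<in>{..<n}. nr (T (\<tau> i) z) w \<le> \<Xi> w * nr z w"
  proof (intro AE_finite_allI finite_lessThan)
    fix i assume "i \<in> {..<n}"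
    then have "\<tau> i \<in> {0..b}" using tagged_partition_tag_in[OF P(1)] \<open>0 \<le> a\<close> by fastforce
    then show "AE w in M. nr (T (\<tau> i) z) w \<le> \<Xi> w * nr z w" using \<Xi> by blast
  qed
  have sum_le: "(\<Sum>i<n. \<bar>s (Suc i) - s i\<bar> * nr (T (\<tau> i) z) w) \<le> (b - a) * \<Xi> w * nr z w"
    if "\<forall>i\<in>{..<n}. nr (T (\<tau> i) z) w \<le> \<Xi> w * nr z w" for w
  proof -
    have "(\<Sum>i<n. \<bar>s (Suc i) - s i\<bar> * nr (T (\<tau> i) z) w) \<le> (\<Sum>i<n. (s (Suc i) - s i) * (\<Xi> w * nr z w))"
      using that P(1) unfolding tagged_partition_def by (intro sum_mono) (auto intro: mult_left_mono)
    also have "\<dots> = (b - a) * \<Xi> w * nr z w"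
      using sum_tagged_partition_lengths[OF P(1)] by (simp add: sum_distrib_right[symmetric] mult.assoc)
    finally show ?thesis .
  qed
  have "AE w in M. e/2 \<le> nr (?R - 0) w \<longrightarrow> e/2 \<le> (b - a) * \<Xi> w * nr z w"
    using bound nr_sum_rsc[OF finite_lessThan[of n], of "\<lambda>i. s (Suc i) - s i" "\<lambda>i. T (\<tau> i) z"]
  proof eventually_elim
    case (elim w)
    have "nr (?R - 0) w \<le> (b - a) * \<Xi> w * nr z w"
      using sum_le[OF elim(1)] elim(2) unfolding riemann_sum_def by simp
    then show ?case by linarith
  qed
  then have "tail_prob (e/2) (?R - 0) \<le> measure M {w\<in>space M. e/2 \<le> (b - a) * \<Xi> w * nr z w}"
    by (rule measure_le_AE_imp) simp
  moreover have "tail_prob e (J - 0) \<le> tail_prob (e/2) (?R - J) + tail_prob (e/2) (?R - 0)"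
    using tail_prob_triangle[of e J 0 ?R] tail_prob_commute[of "e/2" J ?R] by simp
  moreover have "tail_prob (e/2) (?R - J) < l" using d P by blast
  ultimately show "tail_prob e J \<le> measure M {w\<in>space M. e/2 \<le> (b - a) * \<Xi> w * nr z w} + l"
    by simp
qed

end

locale complete_rn_C0_semigroup = rn_C0_semigroup M sm nr T
  for M :: "'w measure"
    and sm :: "('w \<Rightarrow> 'k::real_normed_field) \<Rightarrow> 'a::ab_group_add \<Rightarrow> 'a"
    and nr :: "'a \<Rightarrow> 'w \<Rightarrow> real"
    and T :: "real \<Rightarrow> 'a \<Rightarrow> 'a" +
  assumes rn_complete: "rn_complete M nr"
begin

lemma orbit_has_integral_exists:
  assumes "0 \<le> a" and "a < b"
  shows "\<exists>J. rn_has_integral M sm nr (\<lambda>t. T t y) a b J"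
proof -
  let ?R = "riemann_sum sm (\<lambda>t. T t y)"
  define U where "U N = ?R (Suc N) (uniform_points a b N) (uniform_points a b N)" for N
  have close_U: "tail_prob e (?R n s \<tau> - U N) < l"
    if "tagged_partition a b n s \<tau>" "mesh_less \<delta> n s" "(b - a) / real (Suc N) < \<delta>"
      and Cauchy: "\<And>n s \<tau> m s' \<tau>'. tagged_partition a b n s \<tau> \<Longrightarrow> mesh_less \<delta> n s \<Longrightarrow>
        tagged_partition a b m s' \<tau>' \<Longrightarrow> mesh_less \<delta> m s' \<Longrightarrow> tail_prob e (?R n s \<tau> - ?R m s' \<tau>') < l"
    for e l \<delta> n s \<tau> N
    unfolding U_def using that(1,2) tagged_partition_uniform_points[OF assms(2)]
      mesh_less_uniform_points[OF that(3)] by (rule Cauchy)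
  have "\<exists>N. \<forall>m\<ge>N. \<forall>n\<ge>N. tail_prob e (U m - U n) < l" if el: "e > 0" "l > 0" for e l
  proof -
    obtain \<delta> where "\<delta> > 0" and Cauchy: "\<And>n s \<tau> m s' \<tau>'. tagged_partition a b n s \<tau> \<Longrightarrow> mesh_less \<delta> n s \<Longrightarrow>
        tagged_partition a b m s' \<tau>' \<Longrightarrow> mesh_less \<delta> m s' \<Longrightarrow> tail_prob e (?R n s \<tau> - ?R m s' \<tau>') < l"
      by (rule riemann_sums_orbit_Cauchy[OF assms(1) el, of b y]) blast
    obtain N where N: "\<And>N'. N' \<ge> N \<Longrightarrow> (b - a) / real (Suc N') < \<delta>"
      using eventually_uniform_mesh_less[OF \<open>\<delta> > 0\<close>, of b a] unfolding eventually_sequentially by blast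
    have "tail_prob e (U m - U n) < l" if "m \<ge> N" "n \<ge> N" for m n
      unfolding U_def[of m] using tagged_partition_uniform_points[OF assms(2)]
        mesh_less_uniform_points[OF N[OF that(1)]] N[OF that(2)] Cauchy by (rule close_U)
    then show ?thesis by blast
  qed
  then obtain J where J: "rn_tendsto M nr U J sequentially"
    using rn_complete unfolding rn_complete_def by blast
  have "rn_has_integral M sm nr (\<lambda>t. T t y) a b J"
    unfolding rn_has_integral_iff
  proof (intro allI impI)
    fix e l :: real assume "e > 0" "l > 0"
    obtain \<delta> where "\<delta> > 0" and Cauchy: "\<And>n s \<tau> m s' \<tau>'. tagged_partition a b n s \<tau> \<Longrightarrow> mesh_less \<delta> n s \<Longrightarrow>
        tagged_partition a b m s' \<tau>' \<Longrightarrow> mesh_less \<delta> m s' \<Longrightarrow> tail_prob (e/2) (?R n s \<tau> - ?R m s' \<tau>') < l/2"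
      by (rule riemann_sums_orbit_Cauchy[OF assms(1), of "e/2" "l/2" b y]) (use \<open>e > 0\<close> \<open>l > 0\<close> in auto)
    have "eventually (\<lambda>N. tail_prob (e/2) (U N - J) < l/2 \<and> (b - a) / real (Suc N) < \<delta>) sequentially"
      using \<open>e > 0\<close> \<open>l > 0\<close>
      by (intro eventually_conj rn_tendstoD[OF J] eventually_uniform_mesh_less[OF \<open>\<delta> > 0\<close>]) auto
    then obtain N0 where N0: "\<And>N. N \<ge> N0 \<Longrightarrow> tail_prob (e/2) (U N - J) < l/2 \<and> (b - a) / real (Suc N) < \<delta>"
      unfolding eventually_sequentially by blast
    have N: "tail_prob (e/2) (U N0 - J) < l/2" "(b - a) / real (Suc N0) < \<delta>"
      using N0[OF order_refl] by auto
    have "tail_prob e (?R n s \<tau> - J) < l" if "tagged_partition a b n s \<tau> \<and> mesh_less \<delta> n s" for n s \<tau>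
    proof -
      have "tail_prob (e/2) (?R n s \<tau> - U N0) < l/2"
        using that N(2) Cauchy by (intro close_U) auto
      then show ?thesis using N(1) tail_prob_triangle[of e "?R n s \<tau>" J "U N0"] by linarith
    qed
    then show "\<exists>\<delta>>0. \<forall>n s \<tau>. tagged_partition a b n s \<tau> \<and> mesh_less \<delta> n s \<longrightarrow> tail_prob e (?R n s \<tau> - J) < l"
      using \<open>\<delta> > 0\<close> by blast
  qed
  then show ?thesis by blast
qed

definition orbit_integral :: "'a \<Rightarrow> real \<Rightarrow> real \<Rightarrow> 'a" where
  "orbit_integral y a b = (THE J. rn_has_integral M sm nr (\<lambda>t. T t y) a b J)"

lemma orbit_integral:
  "0 \<le> a \<Longrightarrow> a < b \<Longrightarrow> rn_has_integral M sm nr (\<lambda>t. T t y) a b (orbit_integral y a b)"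
  unfolding orbit_integral_def using orbit_has_integral_exists rn_has_integral_unique by (metis theI)

lemma orbit_integral_unique:
  "0 \<le> a \<Longrightarrow> a < b \<Longrightarrow> rn_has_integral M sm nr (\<lambda>t. T t y) a b J \<Longrightarrow> orbit_integral y a b = J"
  using orbit_integral rn_has_integral_unique by blast

lemma T_orbit_integral_diff:
  assumes "0 < h" "h < r"
  shows "T h (orbit_integral x 0 r) - orbit_integral x 0 r = orbit_integral x r (r + h) - orbit_integral x 0 h"
proof -
  let ?I = "orbit_integral x"
  have "rn_has_integral M sm nr (\<lambda>t. T t (T h x)) 0 r (T h (?I 0 r))"
    using rn_has_integral_orbit_T[of h x 0 r "?I 0 r"] orbit_integral[of 0 r x] assms by simp
  then have "rn_has_integral M sm nr (\<lambda>t. T (t + h) x) 0 r (T h (?I 0 r))"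
    by (rule rn_has_integral_cong[rotated]) (use assms in \<open>simp add: T_T\<close>)
  then have "rn_has_integral M sm nr (\<lambda>t. T t x) (0 + h) (r + h) (T h (?I 0 r))"
    by (rule rn_has_integral_shift[where g="\<lambda>t. T t x"])
  then have "?I h (r + h) = T h (?I 0 r)"
    using assms by (intro orbit_integral_unique) auto
  moreover have "?I 0 (r + h) = ?I 0 h + ?I h (r + h)"
    using assms by (intro rn_has_integral_join_eq[where g="\<lambda>t. T t x" and a=0 and b=h and c="r + h"]
        orbit_integral) auto
  moreover have "?I 0 (r + h) = ?I 0 r + ?I r (r + h)"
    using assms by (intro rn_has_integral_join_eq[where g="\<lambda>t. T t x" and a=0 and b=r and c="r + h"]
        orbit_integral) auto
  ultimately show ?thesis by (simp add: algebra_simps)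
qed

text \<open>By \<open>T_orbit_integral_diff\<close>, the quotient is a difference of two means of the orbit over
  intervals of length \<open>h\<close>.\<close>

lemma rn_tendsto_quotient_orbit_integral:
  assumes "0 < r"
  shows "rn_tendsto M nr (\<lambda>h. sm (rsc (1/h)) (T h (orbit_integral x 0 r) - orbit_integral x 0 r))
      (T r x - x) (at_right 0)"
proof -
  have "rn_tendsto M nr (\<lambda>h. sm (rsc (1/h)) (orbit_integral x r (r + h)) - sm (rsc (1/h)) (orbit_integral x 0 (0 + h)))
      (T r x - T 0 x) (at_right 0)"
    using assms by (intro rn_tendsto_diff rn_tendsto_orbit_mean orbit_integral) auto
  then have "rn_tendsto M nr (\<lambda>h. sm (rsc (1/h)) (orbit_integral x r (r + h)) - sm (rsc (1/h)) (orbit_integral x 0 h))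
      (T r x - x) (at_right 0)"
    by simp
  then show ?thesis
  proof (rule rn_tendsto_cong)
    have "eventually (\<lambda>h. 0 < h \<and> h < r) (at_right 0)"
      using assms unfolding eventually_at_right_field by (intro exI[of _ r]) auto
    then show "eventually (\<lambda>h. sm (rsc (1/h)) (orbit_integral x r (r + h)) - sm (rsc (1/h)) (orbit_integral x 0 h)
        = sm (rsc (1/h)) (T h (orbit_integral x 0 r) - orbit_integral x 0 r)) (at_right 0)"
      by eventually_elim (simp add: T_orbit_integral_diff sm_diff)
  qed
qed

end

section \<open>The infinitesimal generator\<close>

locale rn_C0_generator = rn_C0_semigroup M sm nr T
  for M :: "'w measure"
    and sm :: "('w \<Rightarrow> 'k::real_normed_field) \<Rightarrow> 'a::ab_group_add \<Rightarrow> 'a"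
    and nr :: "'a \<Rightarrow> 'w \<Rightarrow> real"
    and T :: "real \<Rightarrow> 'a \<Rightarrow> 'a" +
  fixes A :: "'a \<Rightarrow> 'a"
  assumes is_generator: "is_generator M sm nr T A"
begin

definition diff_quotient :: "real \<Rightarrow> 'a \<Rightarrow> 'a" where
  "diff_quotient h x = sm (rsc (1/h)) (T h x - x)"

abbreviation DA :: "'a set" where
  "DA \<equiv> gen_domain M sm nr T"

lemma rn_tendsto_diff_quotient: "x \<in> DA \<Longrightarrow> rn_tendsto M nr (\<lambda>h. diff_quotient h x) (A x) (at_right 0)"
  using is_generator unfolding is_generator_def diff_quotient_def by simp

lemma gen_domainI:
  assumes "rn_tendsto M nr (\<lambda>h. diff_quotient h x) y (at_right 0)"
  shows "x \<in> DA" and "A x = y"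
proof -
  show "x \<in> DA" using assms unfolding gen_domain_def diff_quotient_def by blast
  then show "A x = y"
    using rn_tendsto_unique[OF trivial_limit_at_right_real rn_tendsto_diff_quotient assms] by simp
qed

lemma diff_quotient_add: "h \<ge> 0 \<Longrightarrow> diff_quotient h (x + y) = diff_quotient h x + diff_quotient h y"
  unfolding diff_quotient_def by (simp add: T_add sm_add[symmetric] algebra_simps)

lemma diff_quotient_sm: "h \<ge> 0 \<Longrightarrow> \<xi> \<in> L0 M \<Longrightarrow> diff_quotient h (sm \<xi> x) = sm \<xi> (diff_quotient h x)"
  unfolding diff_quotient_def by (simp add: T_sm sm_diff[symmetric] sm_rsc_commute)

lemma diff_quotient_T: "h \<ge> 0 \<Longrightarrow> t \<ge> 0 \<Longrightarrow> diff_quotient h (T t x) = T t (diff_quotient h x)"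
  unfolding diff_quotient_def by (simp add: T_rsc T_diff T_commute)

lemma gen_domainI_cong:
  assumes "rn_tendsto M nr (\<lambda>h. f h) y (at_right 0)" and "\<And>h. h > 0 \<Longrightarrow> f h = diff_quotient h x"
  shows "x \<in> DA" and "A x = y"
proof -
  have "rn_tendsto M nr (\<lambda>h. diff_quotient h x) y (at_right 0)"
  proof (rule rn_tendsto_cong[OF assms(1)])
    show "eventually (\<lambda>h. f h = diff_quotient h x) (at_right 0)"
      using eventually_at_right_less[of 0] by (rule eventually_mono) (simp add: assms(2))
  qed
  then show "x \<in> DA" "A x = y" by (rule gen_domainI)+
qed

lemma gen_domain_zero: "0 \<in> DA"
  using rn_tendsto_const by (rule gen_domainI_cong) (simp add: diff_quotient_def T_zero sm_zero)

lemma gen_domain_add: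
  assumes "x \<in> DA" "y \<in> DA"
  shows "x + y \<in> DA" and "A (x + y) = A x + A y"
  using rn_tendsto_add[OF rn_tendsto_diff_quotient[OF assms(1)] rn_tendsto_diff_quotient[OF assms(2)]]
  by (rule gen_domainI_cong, simp add: diff_quotient_add)+

lemma gen_domain_sm:
  assumes "x \<in> DA" "\<xi> \<in> L0 M"
  shows "sm \<xi> x \<in> DA" and "A (sm \<xi> x) = sm \<xi> (A x)"
  using rn_tendsto_sm[OF assms(2) rn_tendsto_diff_quotient[OF assms(1)]]
  by (rule gen_domainI_cong, simp add: diff_quotient_sm assms(2))+

lemma gen_domain_T:
  assumes "x \<in> DA" "t \<ge> 0"
  shows "T t x \<in> DA" and "A (T t x) = T t (A x)"
  using rn_tendsto_T[OF assms(2) rn_tendsto_diff_quotient[OF assms(1)]]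
  by (rule gen_domainI_cong, simp add: diff_quotient_T assms(2))+

lemma rn_tendsto_right_quotient:
  assumes "x \<in> DA" and "t \<ge> 0"
  shows "rn_tendsto M nr (\<lambda>h. sm (rsc (1/h)) (T (t + h) x - T t x)) (T t (A x)) (at_right 0)"
  using rn_tendsto_T[OF assms(2) rn_tendsto_diff_quotient[OF assms(1)]]
proof (rule rn_tendsto_cong)
  show "eventually (\<lambda>h. T t (diff_quotient h x) = sm (rsc (1/h)) (T (t + h) x - T t x)) (at_right 0)"
    using eventually_at_right_less[of 0]
    by eventually_elim (use assms(2) in \<open>simp add: diff_quotient_def T_rsc T_diff T_T\<close>)
qed

text \<open>For the left quotient write \<open>T t x - T (t - k) x = T (t - k) (T k x - x)\<close>; the factor
  \<open>T (t - k)\<close> varies with \<open>k\<close>, which is handled by the bound on \<open>[0, t]\<close> together with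
  strong continuity at \<open>A x\<close>.\<close>

lemma rn_tendsto_left_quotient:
  assumes "x \<in> DA" and "t > 0"
  shows "rn_tendsto M nr (\<lambda>k. sm (rsc (1/(-k))) (T (t + - k) x - T t x)) (T t (A x)) (at_right 0)"
proof -
  obtain \<Xi> :: "'w \<Rightarrow> real" where [measurable]: "\<Xi> \<in> borel_measurable M"
    and \<Xi>1: "\<And>w. 1 \<le> \<Xi> w" and \<Xi>: "dominates_T_on t \<Xi>"
    using obtain_dominating[of t] by blast
  have \<Xi>0: "AE w in M. 0 \<le> \<Xi> w" using \<Xi>1 by (auto intro: order.trans[OF zero_le_one])
  have small: "eventually (\<lambda>k. 0 < k \<and> k < t) (at_right 0)"
    using assms(2) unfolding eventually_at_right_field by (intro exI[of _ t]) auto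
  have "rn_tendsto M nr (\<lambda>k. T (t - k) (diff_quotient k x - A x)) 0 (at_right 0)"
  proof (rule rn_tendsto_dominated[OF _ \<Xi>0 _ rn_tendsto_diff_quotient[OF assms(1)]])
    show "eventually (\<lambda>k. AE w in M. nr (T (t - k) (diff_quotient k x - A x) - 0) w
        \<le> \<Xi> w * nr (diff_quotient k x - A x) w) (at_right 0)"
      using small by eventually_elim (use \<Xi> in auto)
  qed simp
  moreover have "rn_tendsto M nr (\<lambda>k. T (t - k) (A x)) (T t (A x)) (at_right 0)"
  proof (rule rn_tendsto_dominated[OF _ \<Xi>0 _ rn_tendsto_T_at_0[of "A x"]])
    show "eventually (\<lambda>k. AE w in M. nr (T (t - k) (A x) - T t (A x)) w
        \<le> \<Xi> w * nr (T k (A x) - A x) w) (at_right 0)"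
      using small
    proof eventually_elim
      case (elim k)
      then have "T (t - k) (A x) - T t (A x) = T (t - k) (A x - T k (A x))"
        by (simp add: T_diff T_T)
      moreover have "AE w in M. nr (T (t - k) (A x - T k (A x))) w \<le> \<Xi> w * nr (A x - T k (A x)) w"
        using \<Xi> elim by simp
      ultimately show ?case using nr_commute[of "A x" "T k (A x)"] by (auto elim: AE_mp)
    qed
  qed simp
  ultimately have "rn_tendsto M nr (\<lambda>k. T (t - k) (diff_quotient k x - A x) + T (t - k) (A x)) (0 + T t (A x)) (at_right 0)"
    by (rule rn_tendsto_add)
  then have "rn_tendsto M nr (\<lambda>k. T (t - k) (diff_quotient k x - A x) + T (t - k) (A x)) (T t (A x)) (at_right 0)"
    by simp
  then show ?thesis
  proof (rule rn_tendsto_cong)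
    show "eventually (\<lambda>k. T (t - k) (diff_quotient k x - A x) + T (t - k) (A x)
        = sm (rsc (1/(-k))) (T (t + - k) x - T t x)) (at_right 0)"
      using small
    proof eventually_elim
      case (elim k)
      then have "T t x = T (t - k) (T k x)" by (simp add: T_T)
      then have step: "T (t + - k) x - T t x = - T (t - k) (T k x - x)" using elim by (simp add: T_diff)
      have "T (t - k) (diff_quotient k x - A x) + T (t - k) (A x) = T (t - k) (diff_quotient k x)"
        using elim by (simp add: T_diff)
      also have "\<dots> = sm (rsc (1/k)) (T (t - k) (T k x - x))"
        using elim by (simp add: diff_quotient_def T_rsc)
      also have "\<dots> = sm (rsc (1/(-k))) (T (t + - k) x - T t x)"
        unfolding step by (simp add: sm_rsc_uminus sm_minus)
      finally show ?case .
    qed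
  qed
qed

lemma rn_has_deriv_orbit:
  assumes "x \<in> DA" and "t \<ge> 0"
  shows "rn_has_deriv M sm nr (\<lambda>s. T s x) (A (T t x)) t {0..}"
  unfolding rn_has_deriv_def gen_domain_T(2)[OF assms]
proof (rule rn_tendstoI)
  fix e l :: real assume "e > 0" "l > 0"
  let ?Q = "\<lambda>h. sm (rsc (1/h)) (T (t + h) x - T t x)"
  obtain b1 where "b1 > 0" and b1: "\<And>h. 0 < h \<Longrightarrow> h < b1 \<Longrightarrow> tail_prob e (?Q h - T t (A x)) < l"
    using rn_tendstoD[OF rn_tendsto_right_quotient[OF assms] \<open>e > 0\<close> \<open>l > 0\<close>]
    unfolding eventually_at_right_field by blast
  obtain b2 where "b2 > 0" and b2: "\<And>k. t > 0 \<Longrightarrow> 0 < k \<Longrightarrow> k < b2 \<Longrightarrow> tail_prob e (?Q (- k) - T t (A x)) < l"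
  proof (cases "t > 0")
    case True
    show ?thesis
      using rn_tendstoD[OF rn_tendsto_left_quotient[OF assms(1) True] \<open>e > 0\<close> \<open>l > 0\<close>] that
      unfolding eventually_at_right_field by auto
  qed (use that[of 1] in auto)
  have "tail_prob e (?Q h - T t (A x)) < l" if "t + h \<in> {0..}" "h \<noteq> 0" "\<bar>h\<bar> < min b1 b2" for h
  proof (cases "h > 0")
    case True
    then show ?thesis using that b1 by simp
  next
    case False
    then show ?thesis using that b2[of "- h"] by simp
  qed
  then show "eventually (\<lambda>h. tail_prob e (sm (rsc (1/h)) ((\<lambda>s. T s x) (t + h) - (\<lambda>s. T s x) t) - T t (A x)) < l)
      (at 0 within {h. t + h \<in> {0..}})"
    unfolding eventually_at using \<open>b1 > 0\<close> \<open>b2 > 0\<close> by (intro exI[of _ "min b1 b2"]) (auto simp: dist_real_def)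
qed

end

locale complete_rn_C0_generator = complete_rn_C0_semigroup M sm nr T + rn_C0_generator M sm nr T A
  for M :: "'w measure"
    and sm :: "('w \<Rightarrow> 'k::real_normed_field) \<Rightarrow> 'a::ab_group_add \<Rightarrow> 'a"
    and nr :: "'a \<Rightarrow> 'w \<Rightarrow> real"
    and T :: "real \<Rightarrow> 'a \<Rightarrow> 'a"
    and A :: "'a \<Rightarrow> 'a"
begin

lemma orbit_integral_in_gen_domain: "0 < r \<Longrightarrow> orbit_integral x 0 r \<in> DA"
  using rn_tendsto_quotient_orbit_integral[of r x] unfolding diff_quotient_def[symmetric]
  by (rule gen_domainI(1))

lemma gen_domain_dense: "rn_dense M nr DA"
  unfolding rn_dense_def
proof (intro allI impI)
  fix x and e l :: real assume "e > 0" "l > 0"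
  have "eventually (\<lambda>r. tail_prob e (sm (rsc (1/r)) (orbit_integral x 0 (0 + r)) - T 0 x) < l) (at_right 0)"
    by (intro rn_tendstoD[OF _ \<open>e > 0\<close> \<open>l > 0\<close>] rn_tendsto_orbit_mean orbit_integral) auto
  then obtain b where "b > 0" and b: "\<And>r. 0 < r \<Longrightarrow> r < b \<Longrightarrow> tail_prob e (sm (rsc (1/r)) (orbit_integral x 0 r) - x) < l"
    unfolding eventually_at_right_field by auto
  define y where "y = sm (rsc (2/b)) (orbit_integral x 0 (b/2))"
  have "y \<in> DA"
    unfolding y_def using \<open>b > 0\<close> by (intro gen_domain_sm(1) orbit_integral_in_gen_domain) auto
  moreover have "1 - l < measure M {w\<in>space M. nr (y - x) w < e}"
  proof -
    have "tail_prob e (y - x) < l" unfolding y_def using b[of "b/2"] \<open>b > 0\<close> by simp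
    moreover have "measure M {w\<in>space M. nr (y - x) w < e} = 1 - tail_prob e (y - x)"
      by (subst prob_compl[symmetric]) (auto intro!: arg_cong[where f="measure M"])
    ultimately show ?thesis by linarith
  qed
  ultimately show "\<exists>y\<in>DA. 1 - l < measure M {w\<in>space M. nr (y - x) w < e}" by blast
qed

lemma rn_tendsto_orbit_integral_diff_quotient:
  assumes "x \<in> DA" and "0 < r"
  shows "rn_tendsto M nr (\<lambda>h. orbit_integral (diff_quotient h x) 0 r) (orbit_integral (A x) 0 r) (at_right 0)"
proof (rule rn_tendstoI)
  fix e l :: real assume "e > 0" "l > 0"
  obtain \<Xi> :: "'w \<Rightarrow> real" where [measurable]: "\<Xi> \<in> borel_measurable M"
    and \<Xi>1: "\<And>w. 1 \<le> \<Xi> w" and \<Xi>: "dominates_T_on r \<Xi>"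
    using obtain_dominating[of r] by blast
  obtain C where C: "C > 0" "measure M {w\<in>space M. C \<le> r * \<Xi> w} < l/2"
    using exists_measure_ge_less[of "\<lambda>w. r * \<Xi> w" "l/2"] \<open>l > 0\<close> by auto
  have "eventually (\<lambda>h. tail_prob (e/2/C) (diff_quotient h x - A x) < l/2) (at_right 0)"
    using rn_tendsto_diff_quotient[OF assms(1)] \<open>e > 0\<close> \<open>l > 0\<close> C by (intro rn_tendstoD) auto
  then show "eventually (\<lambda>h. tail_prob e (orbit_integral (diff_quotient h x) 0 r - orbit_integral (A x) 0 r) < l)
      (at_right 0)"
  proof eventually_elim
    case (elim h)
    let ?z = "diff_quotient h x - A x"
    have "rn_has_integral M sm nr (\<lambda>t. T t (diff_quotient h x) - T t (A x)) 0 r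
        (orbit_integral (diff_quotient h x) 0 r - orbit_integral (A x) 0 r)"
      using assms(2) by (intro rn_has_integral_diff orbit_integral) auto
    then have "rn_has_integral M sm nr (\<lambda>t. T t ?z) 0 r
        (orbit_integral (diff_quotient h x) 0 r - orbit_integral (A x) 0 r)"
      by (rule rn_has_integral_cong[rotated]) (auto simp: T_diff)
    then have "tail_prob e (orbit_integral (diff_quotient h x) 0 r - orbit_integral (A x) 0 r)
        \<le> measure M {w\<in>space M. e/2 \<le> (r * \<Xi> w) * nr ?z w}"
      using tail_prob_orbit_integral_le[OF _ assms(2) _ \<Xi> _ \<open>e > 0\<close>] by (simp add: mult.assoc)
    also have "\<dots> \<le> measure M {w\<in>space M. C \<le> r * \<Xi> w} + tail_prob (e/2/C) ?z"
    proof (rule measure_mult_ge_le)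
      show "AE w in M. 0 \<le> r * \<Xi> w"
        using \<Xi>1 assms(2) by (intro AE_I2 mult_nonneg_nonneg) (auto intro: order.trans[OF zero_le_one])
    qed (use C(1) \<open>e > 0\<close> in auto)
    finally show ?case using C(2) elim by linarith
  qed
qed

text \<open>The orbit integral of \<open>diff_quotient h x\<close> equals \<open>diff_quotient h\<close> applied to the orbit
  integral of \<open>x\<close>, so as \<open>h \<rightarrow> 0\<close> it tends both to the orbit integral of \<open>A x\<close> and to \<open>T r x - x\<close>.\<close>

lemma orbit_has_integral_generator:
  assumes "x \<in> DA" and "0 < r"
  shows "rn_has_integral M sm nr (\<lambda>s. T s (A x)) 0 r (T r x - x)"
proof -
  define Z where "Z = orbit_integral x 0 r"
  have Z: "rn_has_integral M sm nr (\<lambda>t. T t x) 0 r Z" unfolding Z_def using assms(2) by (simp add: orbit_integral)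
  have "orbit_integral (diff_quotient h x) 0 r = diff_quotient h Z" if "0 < h" for h
  proof -
    have "rn_has_integral M sm nr (\<lambda>t. T t (T h x) - T t x) 0 r (T h Z - Z)"
      using that by (intro rn_has_integral_diff rn_has_integral_orbit_T Z) auto
    then have "rn_has_integral M sm nr (\<lambda>t. T t (diff_quotient h x)) 0 r (diff_quotient h Z)"
      unfolding diff_quotient_def by (rule rn_has_integral_cong[rotated, OF rn_has_integral_rsc]) (simp add: T_rsc T_diff)
    then show ?thesis using assms(2) by (intro orbit_integral_unique) auto
  qed
  note eq = this
  have "rn_tendsto M nr (\<lambda>h. diff_quotient h Z) (T r x - x) (at_right 0)"
    using rn_tendsto_quotient_orbit_integral[OF assms(2), of x] unfolding Z_def diff_quotient_def .
  then have "rn_tendsto M nr (\<lambda>h. orbit_integral (diff_quotient h x) 0 r) (T r x - x) (at_right 0)"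
  proof (rule rn_tendsto_cong)
    show "eventually (\<lambda>h. diff_quotient h Z = orbit_integral (diff_quotient h x) 0 r) (at_right 0)"
      using eventually_at_right_less[of 0] by (rule eventually_mono) (simp add: eq)
  qed
  then have "orbit_integral (A x) 0 r = T r x - x"
    by (rule rn_tendsto_unique[OF trivial_limit_at_right_real rn_tendsto_orbit_integral_diff_quotient[OF assms]])
  then show ?thesis using orbit_integral[of 0 r "A x"] assms(2) by simp
qed

end

theorem theorem3p9:
  fixes M :: "'w measure"
    and sm :: "('w \<Rightarrow> 'k::real_normed_field) \<Rightarrow> 'a::ab_group_add \<Rightarrow> 'a"
    and nr :: "'a \<Rightarrow> 'w \<Rightarrow> real"
    and T :: "real \<Rightarrow> 'a \<Rightarrow> 'a"
    and A :: "'a \<Rightarrow> 'a"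
  assumes "rn_module M sm nr"
    and "rn_complete M nr"
    and "C0_semigroup M sm nr T"
    and "as_bounded M nr T"
    and "is_generator M sm nr T A"
  shows "rn_dense M nr (gen_domain M sm nr T)
    \<and> submodule M sm (gen_domain M sm nr T)
    \<and> module_hom_on M sm (gen_domain M sm nr T) A
    \<and> (\<forall>x\<in>gen_domain M sm nr T. \<forall>t\<ge>0.
          T t x \<in> gen_domain M sm nr T
          \<and> rn_has_deriv M sm nr (\<lambda>s. T s x) (A (T t x)) t {0..}
          \<and> A (T t x) = T t (A x))
    \<and> (\<forall>x\<in>gen_domain M sm nr T. \<forall>r>0.
          rn_has_integral M sm nr (\<lambda>s. T s (A x)) 0 r (T r x - x)
          \<and> rn_has_integral M sm nr (\<lambda>s. A (T s x)) 0 r (T r x - x))"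
proof -
  interpret complete_rn_C0_generator M sm nr T A
    using assms by unfold_locales auto
  have "submodule M sm DA"
    unfolding submodule_def using gen_domain_zero gen_domain_add(1) gen_domain_sm(1) by blast
  moreover have "module_hom_on M sm DA A"
    unfolding module_hom_on_def using gen_domain_add(2) gen_domain_sm(2) by blast
  moreover have "\<forall>x\<in>DA. \<forall>t\<ge>0. T t x \<in> DA \<and> rn_has_deriv M sm nr (\<lambda>s. T s x) (A (T t x)) t {0..}
      \<and> A (T t x) = T t (A x)"
    using gen_domain_T rn_has_deriv_orbit by blast
  moreover have "rn_has_integral M sm nr (\<lambda>s. A (T s x)) 0 r (T r x - x)" if "x \<in> DA" "r > 0" for x r
    using orbit_has_integral_generator[OF that] by (rule rn_has_integral_cong[rotated]) (use gen_domain_T(2)[OF that(1)] in auto)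
  ultimately show ?thesis
    using gen_domain_dense orbit_has_integral_generator by blast
qed

end
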